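(* Let $\Omega\subset\mathbb R^{n+1}$ be a bounded $C^2$ domain, $S=\partial\Omega$, $\beta\in C^1(S,(0,\pi))$, and $p\ge1$. There is a constant $C=C(n,p,\beta,\operatorname{diam}(\Omega),|h_S|_{C^0(S)})<\infty$ such that the following holds. Let $V$ be an oriented integral $n$-varifold on $\overline\Omega$ with $\|V\|$ $n$-rectifiable of class $C^2$, and $\Gamma$ a Radon measure on $G^o_{n,\beta}(S)$ with $x\notin\operatorname{spt}\|\Gamma\|$ for $\|V\|$-a.e. $x$. If $V$ has curvature in $L^p$, with coefficients $W_{ia}$, and prescribed contact angle $\beta$ with $S$ along $\Gamma$, then $$\|V\|(\overline\Omega)\le C\big(\|\Gamma\|(S)+\|W\|^p_{L^p(V)}\big),\qquad \|\Gamma\|(S)\le C\big(\|V\|(\overline\Omega)+\|W\|^p_{L^p(V)}\big),$$ where $\|W\|^p_{L^p(V)}=\int|W|^p\,dV$ and $|W|$ is the Frobenius norm of the matrix $(W_{ia})$.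
   Context: Notation and conventions. $n\ge1$. $\nu^S$ is the unit normal to $S$ pointing into $\Omega$, $h_S$ is the second fundamental form of $S$. $\mathcal H^k$ is $k$-dimensional Hausdorff measure; repeated indices are summed over $\{1,\dots,n+1\}$; $\pi(x,y)=x$ is projection onto the first factor; $f_\#\mu(E)=\mu(f^{-1}(E))$ is push-forward. Grassmannians. The oriented Grassmannian bundle over $A\subset\mathbb R^{n+1}$ is $G^o_n(A)=A\times\mathbf S^n\subset A\times\mathbb R^{n+1}$, where $v\in\mathbf S^n$ represents the oriented hyperplane $v^\perp$ with unit normal $v$. For $v\in\mathbf S^n$, $v^\perp(u):=u-\langle u,v\rangle v$. Capillary bundles. For $x\in S$, $G^o_{n,\beta}(x):=\{v\in\mathbf S^n:|\langle v,\nu^S(x)\rangle|=|\cos\beta(x)|\}$ and $G^o_{n,\beta}(S):=\{(x,v):x\in S,\ v\in G^o_{n,\beta}(x)\}$; for such $(x,v)$, $\mathbf n^o(x,v):=v^\perp(\nu^S(x))/|v^\perp(\nu^S(x))|$. For a Radon measure $\Gamma$ on $G^o_{n,\beta}(S)$, $\|\Gamma\|=\pi_\#\Gamma$. Oriented varifolds. An oriented $n$-varifold is a Radon measure $V$ on $\mathbb R^{n+1}\times\mathbf S^n$; its weight is $\|V\|=\pi_\#V$, and it is on $A$ if $\|V\|$ is supported in $A$. It is an oriented integral $n$-varifold, written $V=\mathbf v(R,\xi,\theta_1,\theta_2)$, if there are an $n$-rectifiable set $R$, a measurable unit normal $\xi$ to the approximate tangent planes $T_xR$, and locally integrable $\mathbb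 N$-valued $\theta_1,\theta_2$ with $(\theta_1,\theta_2)\ne(0,0)$ $\mathcal H^n$-a.e. on $R$, such that $V(\phi)=\int_R(\theta_1\phi(x,\xi(x))+\theta_2\phi(x,-\xi(x)))\,d\mathcal H^n$; then $\|V\|=(\theta_1+\theta_2)\mathcal H^n\llcorner R$. A Radon measure $\mu$ is $n$-rectifiable of class $C^2$ if $\mu=\tau\mathcal H^n\llcorner M$ with $\tau>0$ locally integrable and $M$ covered, up to an $\mathcal H^n$-null set, by countably many embedded $n$-dimensional $C^2$ submanifolds. Definition (curvature with capillary boundary). Let $V$ be an oriented integral $n$-varifold on $\overline\Omega$ and $\Gamma$ a Radon measure on $G^o_{n,\beta}(S)$. $V$ has curvature and prescribed contact angle $\beta$ with $S$ along $\Gamma$ if there are $V$-measurable real functions $W_{ia}$, $i,a\in\{1,\dots,n+1\}$, defined $V$-a.e., with $$\int\big((\delta_{ij}-v_iv_j)D_j\phi+W_{ia}D^*_a\phi-(W_{rr}v_i+W_{ri}v_r)\phi\big)\,dV=-\int\phi\,\mathbf n^o_i\,d\Gamma$$ for all $\phi\in C^1_c(\mathbb R^{n+1}\times\mathbb R^{n+1})$ and all $i$, where $D_j$ is the partial derivative in $x_j$ (first factor) and $D^*_a$ in $v_a$ (second factor). It has curvature in $L^p$ if all $W_{ia}\in L^p(V)$. *)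

theory Defs
  imports "HOL-Analysis.Analysis"
begin

definition C1_on :: "'a::euclidean_space set \<Rightarrow> ('a \<Rightarrow> 'b::real_normed_vector) \<Rightarrow> bool" where
  "C1_on U f \<longleftrightarrow> (\<forall>x\<in>U. f differentiable (at x)) \<and>
     (\<forall>h. continuous_on U (\<lambda>x. frechet_derivative f (at x) h))"

definition C2_on :: "'a::euclidean_space set \<Rightarrow> ('a \<Rightarrow> 'b::real_normed_vector) \<Rightarrow> bool" where
  "C2_on U f \<longleftrightarrow> C1_on U f \<and> (\<forall>h. C1_on U (\<lambda>x. frechet_derivative f (at x) h))"

definition C1c :: "('a::euclidean_space \<times> 'a \<Rightarrow> real) \<Rightarrow> bool" where
  "C1c \<phi> \<longleftrightarrow> C1_on UNIV \<phi> \<and> compact (closure {z. \<phi> z \<noteq> 0})"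

definition local_defining_fn :: "'a::euclidean_space set \<Rightarrow> 'a \<Rightarrow> real \<Rightarrow> ('a \<Rightarrow> real) \<Rightarrow> bool" where
  "local_defining_fn \<Omega> x r \<rho> \<longleftrightarrow> r > 0 \<and> C2_on (ball x r) \<rho> \<and>
     (\<forall>z\<in>ball x r. frechet_derivative \<rho> (at z) \<noteq> (\<lambda>_. 0)) \<and>
     \<Omega> \<inter> ball x r = {z \<in> ball x r. \<rho> z < 0}"

definition C2_domain :: "'a::euclidean_space set \<Rightarrow> bool" where
  "C2_domain \<Omega> \<longleftrightarrow> open \<Omega> \<and> connected \<Omega> \<and> \<Omega> \<noteq> {} \<and>
     (\<forall>x\<in>frontier \<Omega>. \<exists>r \<rho>. local_defining_fn \<Omega> x r \<rho>)"

text \<open>Unit normal to S = frontier Omega pointing into Omega: -grad rho/|grad rho|.\<close>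
definition inward_normal :: "'a::euclidean_space set \<Rightarrow> 'a \<Rightarrow> 'a" where
  "inward_normal \<Omega> x = (SOME v. norm v = 1 \<and> (\<exists>r \<rho>. local_defining_fn \<Omega> x r \<rho> \<and>
      (\<exists>c>0. \<forall>h. frechet_derivative \<rho> (at x) h = - c * (v \<bullet> h))))"

definition C1_on_surface :: "'a::euclidean_space set \<Rightarrow> ('a \<Rightarrow> real) \<Rightarrow> bool" where
  "C1_on_surface S \<beta> \<longleftrightarrow> (\<exists>U b. open U \<and> S \<subseteq> U \<and> C1_on U b \<and> (\<forall>x\<in>S. b x = \<beta> x))"

definition C2_hypersurface :: "'a::euclidean_space set \<Rightarrow> bool" where
  "C2_hypersurface N \<longleftrightarrow> (\<forall>y\<in>N. \<exists>U g. open U \<and> y \<in> U \<and> C2_on U (g :: 'a \<Rightarrow> real) \<and>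
      (\<forall>z\<in>U. frechet_derivative g (at z) \<noteq> (\<lambda>_. 0)) \<and> N \<inter> U = {z\<in>U. g z = 0})"

definition radon :: "('b::euclidean_space) measure \<Rightarrow> bool" where
  "radon M \<longleftrightarrow> sets M = sets borel \<and> (\<forall>K. compact K \<longrightarrow> emeasure M K < \<infinity>)"

definition msupport :: "'b::euclidean_space measure \<Rightarrow> 'b set" where
  "msupport M = {x. \<forall>r>0. emeasure M (ball x r) > 0}"

definition weight :: "('a::euclidean_space \<times> 'a) measure \<Rightarrow> 'a measure" where
  "weight V = distr V borel fst"

definition hausdorff_pre :: "nat \<Rightarrow> real \<Rightarrow> 'a::euclidean_space set \<Rightarrow> ennreal" where
  "hausdorff_pre m \<delta> A = (INF C \<in> {C :: nat \<Rightarrow> 'a set. A \<subseteq> (\<Union>i. C i) \<and>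
        (\<forall>i. bounded (C i) \<and> diameter (C i) \<le> \<delta>)}.
      (\<Sum>i. ennreal (unit_ball_vol (real m) * (diameter (C i) / 2) ^ m)))"

definition hausdorff_outer :: "nat \<Rightarrow> 'a::euclidean_space set \<Rightarrow> ennreal" where
  "hausdorff_outer m A = (SUP \<delta> \<in> {0<..}. hausdorff_pre m \<delta> A)"

text \<open>H^m as a measure on the Borel sets (on which it is countably additive), and its completion.\<close>
definition hausdorff :: "nat \<Rightarrow> 'a::euclidean_space measure" where
  "hausdorff m = completion (measure_of UNIV (sets borel) (hausdorff_outer m))"

definition countably_rectifiable :: "nat \<Rightarrow> 'a::euclidean_space set \<Rightarrow> bool" where
  "countably_rectifiable m R \<longleftrightarrow> (\<exists>R0 (L :: 'a set) (F :: nat \<Rightarrow> 'a \<Rightarrow> 'a). hausdorff_outer m R0 = 0 \<and> subspace L \<and> dim L = m \<and>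
      (\<forall>j. \<exists>B. lipschitz_on B L (F j)) \<and> R \<subseteq> R0 \<union> (\<Union>j. F j ` L))"

text \<open>P is the approximate tangent plane of R at x with respect to the multiplicity theta
  (Simon, GMT 11.4).\<close>
definition approx_tangent :: "nat \<Rightarrow> 'a::euclidean_space set \<Rightarrow> ('a \<Rightarrow> real) \<Rightarrow> 'a \<Rightarrow> 'a set \<Rightarrow> bool" where
  "approx_tangent m R \<theta> x P \<longleftrightarrow> subspace P \<and> dim P = m \<and>
     (\<forall>f :: 'a \<Rightarrow> real. continuous_on UNIV f \<and> compact (closure {y. f y \<noteq> 0}) \<longrightarrow>
        ((\<lambda>t. t powr (- real m) *
            (\<integral>y. indicator R y * \<theta> y * f ((1 / t) *\<^sub>R (y - x)) \<partial>hausdorff m))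
          \<longlongrightarrow> \<theta> x * (\<integral>y. indicator P y * f y \<partial>hausdorff m)) (at_right 0))"

definition oriented_integral_varifold :: "nat \<Rightarrow> ('a::euclidean_space \<times> 'a) measure \<Rightarrow> bool" where
  "oriented_integral_varifold m V \<longleftrightarrow> radon V \<and> emeasure V (- (UNIV \<times> sphere 0 1)) = 0 \<and>
    (\<exists>R \<xi> (\<theta>1 :: 'a \<Rightarrow> nat) \<theta>2.
       countably_rectifiable m R \<and>
       \<xi> \<in> borel_measurable (hausdorff m) \<and>
       \<theta>1 \<in> measurable (hausdorff m) (count_space UNIV) \<and>
       \<theta>2 \<in> measurable (hausdorff m) (count_space UNIV) \<and>
       (\<forall>K. compact K \<longrightarrow> (\<integral>\<^sup>+x. indicator (R \<inter> K) x * ennreal (real (\<theta>1 x + \<theta>2 x)) \<partial>hausdorff m) < \<infinity>) \<and>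
       (AE x in hausdorff m. x \<in> R \<longrightarrow> (\<theta>1 x, \<theta>2 x) \<noteq> (0, 0)) \<and>
       (AE x in hausdorff m. x \<in> R \<longrightarrow> norm (\<xi> x) = 1 \<and>
          (\<exists>P. approx_tangent m R (\<lambda>y. real (\<theta>1 y + \<theta>2 y)) x P \<and> (\<forall>u\<in>P. \<xi> x \<bullet> u = 0))) \<and>
       (\<forall>E \<in> sets borel. emeasure V E =
          (\<integral>\<^sup>+x. indicator R x * (ennreal (real (\<theta>1 x)) * indicator E (x, \<xi> x)
                 + ennreal (real (\<theta>2 x)) * indicator E (x, - \<xi> x)) \<partial>hausdorff m)))"

definition C2_rectifiable_measure :: "nat \<Rightarrow> 'a::euclidean_space measure \<Rightarrow> bool" where
  "C2_rectifiable_measure m \<mu> \<longleftrightarrow> (\<exists>(\<tau> :: 'a \<Rightarrow> real) (M :: 'a set) (N :: nat \<Rightarrow> 'a set).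
     \<tau> \<in> borel_measurable (hausdorff m) \<and> (\<forall>x\<in>M. \<tau> x > 0) \<and>
     (\<forall>K. compact K \<longrightarrow> (\<integral>\<^sup>+x. indicator (M \<inter> K) x * ennreal (\<tau> x) \<partial>hausdorff m) < \<infinity>) \<and>
     (\<forall>k. C2_hypersurface (N k)) \<and> hausdorff_outer m (M - (\<Union>k. N k)) = 0 \<and>
     (\<forall>E \<in> sets borel. emeasure \<mu> E = (\<integral>\<^sup>+x. indicator M x * ennreal (\<tau> x) * indicator E x \<partial>hausdorff m)))"

definition capillary_fibre :: "'a::euclidean_space set \<Rightarrow> ('a \<Rightarrow> real) \<Rightarrow> 'a \<Rightarrow> 'a set" where
  "capillary_fibre \<Omega> \<beta> x = {v \<in> sphere 0 1. \<bar>v \<bullet> inward_normal \<Omega> x\<bar> = \<bar>cos (\<beta> x)\<bar>}"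

definition capillary_bundle :: "'a::euclidean_space set \<Rightarrow> ('a \<Rightarrow> real) \<Rightarrow> ('a \<times> 'a) set" where
  "capillary_bundle \<Omega> \<beta> = {(x, v). x \<in> frontier \<Omega> \<and> v \<in> capillary_fibre \<Omega> \<beta> x}"

definition vperp :: "'a::euclidean_space \<Rightarrow> 'a \<Rightarrow> 'a" where
  "vperp v u = u - (u \<bullet> v) *\<^sub>R v"

text \<open>The conormal n^o(x,v); set to 0 off the capillary bundle (where it is not used).\<close>
definition conormal :: "'a::euclidean_space set \<Rightarrow> ('a \<Rightarrow> real) \<Rightarrow> 'a \<times> 'a \<Rightarrow> 'a" where
  "conormal \<Omega> \<beta> z = (if z \<in> capillary_bundle \<Omega> \<beta> then
      (let (x, v) = z in (1 / norm (vperp v (inward_normal \<Omega> x))) *\<^sub>R vperp v (inward_normal \<Omega> x))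
    else 0)"

definition Dx :: "('a::euclidean_space \<times> 'a \<Rightarrow> real) \<Rightarrow> 'a \<Rightarrow> 'a \<times> 'a \<Rightarrow> real" where
  "Dx \<phi> j z = frechet_derivative \<phi> (at z) (j, 0)"

definition Dv :: "('a::euclidean_space \<times> 'a \<Rightarrow> real) \<Rightarrow> 'a \<Rightarrow> 'a \<times> 'a \<Rightarrow> real" where
  "Dv \<phi> a z = frechet_derivative \<phi> (at z) (0, a)"

definition curv_integrand ::
    "('a::euclidean_space \<times> 'a \<Rightarrow> 'a \<Rightarrow> 'a \<Rightarrow> real) \<Rightarrow> ('a \<times> 'a \<Rightarrow> real) \<Rightarrow> 'a \<Rightarrow> 'a \<times> 'a \<Rightarrow> real" where
  "curv_integrand W \<phi> i z = (let v = snd z in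
      (\<Sum>j\<in>Basis. ((if i = j then 1 else 0) - (v \<bullet> i) * (v \<bullet> j)) * Dx \<phi> j z)
    + (\<Sum>a\<in>Basis. W z i a * Dv \<phi> a z)
    - (\<Sum>r\<in>Basis. W z r r * (v \<bullet> i) + W z r i * (v \<bullet> r)) * \<phi> z)"

text \<open>Integrals are with respect to the completion of V
  (V-measurable functions); the integrand is required to be V-integrable so that the
  left-hand side is meaningful.\<close>
definition has_capillary_curvature ::
    "'a::euclidean_space set \<Rightarrow> ('a \<Rightarrow> real) \<Rightarrow> ('a \<times> 'a) measure \<Rightarrow> ('a \<times> 'a) measure
      \<Rightarrow> ('a \<times> 'a \<Rightarrow> 'a \<Rightarrow> 'a \<Rightarrow> real) \<Rightarrow> bool" where
  "has_capillary_curvature \<Omega> \<beta> V \<Gamma> W \<longleftrightarrow>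
     (\<forall>i\<in>Basis. \<forall>a\<in>Basis. (\<lambda>z. W z i a) \<in> borel_measurable (completion V)) \<and>
     (\<forall>\<phi>. C1c \<phi> \<longrightarrow> (\<forall>i\<in>Basis.
        integrable (completion V) (curv_integrand W \<phi> i) \<and>
        (\<integral>z. curv_integrand W \<phi> i z \<partial>completion V) = - (\<integral>z. \<phi> z * (conormal \<Omega> \<beta> z \<bullet> i) \<partial>\<Gamma>)))"

definition curvature_in_Lp :: "real \<Rightarrow> ('a::euclidean_space \<times> 'a) measure \<Rightarrow> ('a \<times> 'a \<Rightarrow> 'a \<Rightarrow> 'a \<Rightarrow> real) \<Rightarrow> bool" where
  "curvature_in_Lp p V W \<longleftrightarrow> (\<forall>i\<in>Basis. \<forall>a\<in>Basis.
      (\<lambda>z. W z i a) \<in> borel_measurable (completion V) \<and>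
      integrable (completion V) (\<lambda>z. \<bar>W z i a\<bar> powr p))"

definition frob :: "('a::euclidean_space \<times> 'a \<Rightarrow> 'a \<Rightarrow> 'a \<Rightarrow> real) \<Rightarrow> 'a \<times> 'a \<Rightarrow> real" where
  "frob W z = sqrt (\<Sum>i\<in>Basis. \<Sum>a\<in>Basis. (W z i a)\<^sup>2)"

definition Lp_norm_pow :: "real \<Rightarrow> ('a::euclidean_space \<times> 'a) measure \<Rightarrow> ('a \<times> 'a \<Rightarrow> 'a \<Rightarrow> 'a \<Rightarrow> real) \<Rightarrow> real" where
  "Lp_norm_pow p V W = (\<integral>z. frob W z powr p \<partial>completion V)"

end

(*
  Test the first variation identity with fields Psi(x, v) = Y(x), cut off far from
  closure Omega x S^n, where V and Gamma live.  Pointwise on the support of V the integrand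
  equals the tangential divergence div_{v^perp} Y up to an error of size |Y| |W|, and the
  boundary term is the integral of Y . n^o over Gamma.

  For Y(x) = x the tangential divergence is n and |x . n^o| is bounded on closure Omega,
  which bounds ||V|| by ||Gamma|| and the integral of |W|; that integral is absorbed using
  |W| <= eps + eps^(1-p) |W|^p.  For a polynomial Y close to the inward normal nu
  (Stone-Weierstrass), Y . n^o is close to nu . n^o = sin beta >= c > 0 on the capillary
  bundle, which bounds ||Gamma|| by ||V|| and the integral of |W|.
*)

theory Submission
  imports Defs
begin

section \<open>\<open>C\<^sup>1\<close> functions\<close>

lemma C1_on_imp_has_derivative:
  "C1_on U f \<Longrightarrow> x \<in> U \<Longrightarrow> (f has_derivative frechet_derivative f (at x)) (at x)"
  unfolding C1_on_def using frechet_derivative_works by blast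

lemma C1_on_imp_continuous_on: "C1_on U f \<Longrightarrow> open U \<Longrightarrow> continuous_on U f"
  by (meson C1_on_imp_has_derivative continuous_on_eq_continuous_at has_derivative_continuous)

lemma C1_on_UNIV_intro:
  assumes "\<And>x. (f has_derivative f' x) (at x)" and "\<And>h. continuous_on UNIV (\<lambda>x. f' x h)"
  shows "C1_on UNIV f"
proof -
  have "frechet_derivative f (at x) = f' x" for x
    using assms(1) frechet_derivative_at by metis
  then show ?thesis
    using assms unfolding C1_on_def differentiable_def by auto
qed

lemma C1_on_mult:
  fixes f g :: "'a::euclidean_space \<Rightarrow> real"
  assumes f: "C1_on UNIV f" and g: "C1_on UNIV g"
  shows "C1_on UNIV (\<lambda>x. f x * g x)"
proof (rule C1_on_UNIV_intro)
  show "((\<lambda>x. f x * g x) has_derivative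
      (\<lambda>h. f x * frechet_derivative g (at x) h + frechet_derivative f (at x) h * g x)) (at x)" for x
    using f g by (auto intro!: derivative_eq_intros C1_on_imp_has_derivative)
  show "continuous_on UNIV
      (\<lambda>x. f x * frechet_derivative g (at x) h + frechet_derivative f (at x) h * g x)" for h
    using f g C1_on_imp_continuous_on[OF f] C1_on_imp_continuous_on[OF g]
    unfolding C1_on_def by (intro continuous_intros) auto
qed

lemma C1_on_add:
  fixes f g :: "'a::euclidean_space \<Rightarrow> real"
  assumes f: "C1_on UNIV f" and g: "C1_on UNIV g"
  shows "C1_on UNIV (\<lambda>x. f x + g x)"
proof (rule C1_on_UNIV_intro)
  show "((\<lambda>x. f x + g x) has_derivative
      (\<lambda>h. frechet_derivative f (at x) h + frechet_derivative g (at x) h)) (at x)" for x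
    using f g by (auto intro!: derivative_eq_intros C1_on_imp_has_derivative)
  show "continuous_on UNIV (\<lambda>x. frechet_derivative f (at x) h + frechet_derivative g (at x) h)" for h
    using f g unfolding C1_on_def by (intro continuous_intros) auto
qed

lemma C1_on_bounded_linear:
  "bounded_linear (f :: 'a::euclidean_space \<Rightarrow> real) \<Longrightarrow> C1_on UNIV f"
  by (rule C1_on_UNIV_intro[where f'="\<lambda>_. f"]) (auto intro: bounded_linear_imp_has_derivative)

lemma C1_on_real_polynomial_function:
  fixes f :: "'a::euclidean_space \<Rightarrow> real"
  assumes "real_polynomial_function f"
  shows "C1_on UNIV f"
  using assms
proof (induction rule: real_polynomial_function.induct)
  case (const c)
  show ?case by (rule C1_on_UNIV_intro[where f'="\<lambda>_ _. 0"]) auto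
qed (auto intro: C1_on_bounded_linear C1_on_add C1_on_mult)

lemma C1c_continuous_on:
  assumes "C1c \<phi>"
  shows "continuous_on UNIV \<phi>" and "continuous_on UNIV (Dx \<phi> j)" and "continuous_on UNIV (Dv \<phi> j)"
  using assms C1_on_imp_continuous_on[of UNIV \<phi>] unfolding C1c_def C1_on_def Dx_def Dv_def
  by auto

lemma C1c_bounded:
  assumes "C1c \<phi>"
  obtains B where "\<And>z. \<bar>\<phi> z\<bar> \<le> B"
proof -
  let ?K = "closure {z. \<phi> z \<noteq> 0}"
  have "compact (\<phi> ` ?K)"
    using assms C1c_continuous_on(1)[OF assms] unfolding C1c_def
    by (meson compact_continuous_image continuous_on_subset subset_UNIV)
  then obtain B where B: "\<forall>y\<in>\<phi> ` ?K. \<bar>y\<bar> \<le> B"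
    by (auto dest!: compact_imp_bounded simp: bounded_iff)
  have "\<bar>\<phi> z\<bar> \<le> max B 0" for z
    using B closure_subset[of "{z. \<phi> z \<noteq> 0}"] by (cases "\<phi> z = 0") force+
  then show thesis by (rule that)
qed

section \<open>Cutoff vector fields\<close>

definition pos_sq :: "real \<Rightarrow> real" where
  "pos_sq s = (max 0 s)\<^sup>2"

lemma pos_sq_has_real_derivative: "(pos_sq has_real_derivative 2 * max 0 s) (at s)"
proof -
  consider "s < 0" | "s = 0" | "s > 0" by linarith
  then show ?thesis
  proof cases
    case 1
    have d: "((\<lambda>_. 0) has_real_derivative 0) (at s)"
      by (rule DERIV_const)
    have "pos_sq x = 0" if "x < 0" for x
      using that by (simp add: pos_sq_def)
    then show ?thesis
      using has_field_derivative_transform_within_open[OF d, of "{..<0}" pos_sq] 1 by simp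
  next
    case 2
    have "norm (pos_sq h / h) \<le> \<bar>h\<bar>" for h
    proof (cases "h > 0")
      case True
      then show ?thesis by (simp add: pos_sq_def power2_eq_square)
    next
      case False
      then show ?thesis by (simp add: pos_sq_def max_def)
    qed
    then have "((\<lambda>h. pos_sq h / h) \<longlongrightarrow> 0) (at 0)"
      by (intro Lim_null_comparison[OF always_eventually tendsto_rabs_zero[OF tendsto_ident_at]])
         simp
    moreover have "pos_sq 0 = 0"
      by (simp add: pos_sq_def)
    ultimately show ?thesis
      using 2 by (simp add: DERIV_def)
  next
    case 3
    have d: "((\<lambda>x. x\<^sup>2) has_real_derivative 2 * s) (at s)"
      by (auto intro!: derivative_eq_intros)
    have "pos_sq x = x\<^sup>2" if "x > 0" for x
      using that by (simp add: pos_sq_def)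
    then show ?thesis
      using has_field_derivative_transform_within_open[OF d, of "{0<..}" pos_sq] 3 by simp
  qed
qed

definition cutoff :: "real \<Rightarrow> real \<Rightarrow> real \<Rightarrow> real" where
  "cutoff a b t = pos_sq (b - t) / (pos_sq (b - t) + pos_sq (t - a))"

definition cutoff_deriv :: "real \<Rightarrow> real \<Rightarrow> real \<Rightarrow> real" where
  "cutoff_deriv a b t =
     (- 2 * max 0 (b - t) * pos_sq (t - a) - 2 * max 0 (t - a) * pos_sq (b - t))
       / (pos_sq (b - t) + pos_sq (t - a))\<^sup>2"

lemma cutoff_denominator_pos: "a < b \<Longrightarrow> pos_sq (b - t) + pos_sq (t - a) > 0"
  by (cases "t < b") (auto simp: pos_sq_def intro: add_pos_nonneg add_nonneg_pos)

lemma cutoff_eq_1: "a < b \<Longrightarrow> t \<le> a \<Longrightarrow> cutoff a b t = 1"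
  using cutoff_denominator_pos[of a b t] by (auto simp: cutoff_def pos_sq_def)

lemma cutoff_eq_0: "b \<le> t \<Longrightarrow> cutoff a b t = 0"
  by (auto simp: cutoff_def pos_sq_def)

lemma cutoff_has_real_derivative:
  assumes "a < b"
  shows "(cutoff a b has_real_derivative cutoff_deriv a b t) (at t)"
proof -
  have num: "((\<lambda>t. pos_sq (b - t)) has_real_derivative 2 * max 0 (b - t) * - 1) (at t)"
    by (rule DERIV_chain2[OF pos_sq_has_real_derivative]) (auto intro!: derivative_eq_intros)
  have den: "((\<lambda>t. pos_sq (t - a)) has_real_derivative 2 * max 0 (t - a) * 1) (at t)"
    by (rule DERIV_chain2[OF pos_sq_has_real_derivative]) (auto intro!: derivative_eq_intros)
  show ?thesis
    unfolding cutoff_def[abs_def]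
    using DERIV_divide[OF num DERIV_add[OF num den]] cutoff_denominator_pos[OF assms, of t]
    by (simp add: cutoff_deriv_def power2_eq_square algebra_simps)
qed

lemma continuous_on_cutoff_deriv:
  assumes "a < b"
  shows "continuous_on UNIV (cutoff_deriv a b)"
proof -
  have "(pos_sq (b - t) + pos_sq (t - a))\<^sup>2 \<noteq> 0" for t
    using cutoff_denominator_pos[OF assms, of t] by simp
  then show ?thesis
    unfolding cutoff_deriv_def pos_sq_def by (intro continuous_intros) auto
qed

lemma C1_on_cutoff_inner_self:
  assumes "a < b"
  shows "C1_on UNIV (\<lambda>z::'a::euclidean_space. cutoff a b (z \<bullet> z))"
proof (rule C1_on_UNIV_intro)
  show "((\<lambda>z. cutoff a b (z \<bullet> z)) has_derivative
      (\<lambda>h. cutoff_deriv a b (z \<bullet> z) * (z \<bullet> h + h \<bullet> z))) (at z)" for z :: 'a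
    by (rule has_derivative_compose[OF has_derivative_inner[OF has_derivative_ident has_derivative_ident]
        cutoff_has_real_derivative[OF assms, unfolded has_field_derivative_def]])
  show "continuous_on UNIV (\<lambda>z::'a. cutoff_deriv a b (z \<bullet> z) * (z \<bullet> h + h \<bullet> z))" for h
  proof -
    have "continuous_on UNIV (\<lambda>z::'a. cutoff_deriv a b (z \<bullet> z))"
      by (rule continuous_on_compose2[OF continuous_on_cutoff_deriv[OF assms]])
         (auto intro: continuous_intros)
    then show ?thesis
      by (intro continuous_intros)
  qed
qed

definition cutoff_field :: "real \<Rightarrow> real \<Rightarrow> ('a::euclidean_space \<Rightarrow> 'a) \<Rightarrow> 'a \<times> 'a \<Rightarrow> 'a" where
  "cutoff_field a b Y z = cutoff a b (z \<bullet> z) *\<^sub>R Y (fst z)"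

lemma cutoff_field_eq_0: "b \<le> z \<bullet> z \<Longrightarrow> cutoff_field a b Y z = 0"
  by (simp add: cutoff_field_def cutoff_eq_0)

lemma cutoff_field_eq: "a < b \<Longrightarrow> z \<bullet> z \<le> a \<Longrightarrow> cutoff_field a b Y z = Y (fst z)"
  by (simp add: cutoff_field_def cutoff_eq_1)

lemma C1c_cutoff_field:
  assumes ab: "a < b" and Y: "polynomial_function Y"
  shows "\<forall>i\<in>Basis. C1c (\<lambda>z. cutoff_field a b Y z \<bullet> i)"
proof
  fix i :: 'a
  assume i: "i \<in> Basis"
  have "polynomial_function (\<lambda>z::'a \<times> 'a. Y (fst z))"
    using polynomial_function_compose[OF polynomial_function_bounded_linear[OF bounded_linear_fst] Y]
    by (simp add: o_def)
  then have "real_polynomial_function (\<lambda>z::'a \<times> 'a. Y (fst z) \<bullet> i)"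
    using i by (simp add: polynomial_function_iff_Basis_inner)
  then have "C1_on UNIV (\<lambda>z. cutoff_field a b Y z \<bullet> i)"
    using C1_on_mult[OF C1_on_real_polynomial_function C1_on_cutoff_inner_self[OF ab]]
    by (simp add: cutoff_field_def mult.commute)
  moreover have "{z. cutoff_field a b Y z \<bullet> i \<noteq> 0} \<subseteq> {z. z \<bullet> z \<le> b}"
    by (smt (verit, best) cutoff_field_eq_0 inner_zero_left mem_Collect_eq subsetI)
  moreover have "closed {z::'a \<times> 'a. z \<bullet> z \<le> b}"
    by (intro closed_Collect_le continuous_intros)
  ultimately have "closure {z. cutoff_field a b Y z \<bullet> i \<noteq> 0} \<subseteq> cball 0 (sqrt b)"
    by (force dest: closure_minimal simp: norm_eq_sqrt_inner)
  then have "compact (closure {z. cutoff_field a b Y z \<bullet> i \<noteq> 0})"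
    by (meson bounded_cball bounded_subset closed_closure compact_eq_bounded_closed)
  with \<open>C1_on UNIV (\<lambda>z. cutoff_field a b Y z \<bullet> i)\<close> show "C1c (\<lambda>z. cutoff_field a b Y z \<bullet> i)"
    by (simp add: C1c_def)
qed

lemma cutoff_field_has_derivative:
  assumes ab: "a < b" and z: "z \<bullet> z < a" and Y: "(Y has_derivative DY) (at (fst z))"
  shows "((\<lambda>z. cutoff_field a b Y z \<bullet> i) has_derivative (\<lambda>h. DY (fst h) \<bullet> i)) (at z)"
proof (rule has_derivative_transform_within_open)
  show "((\<lambda>z. Y (fst z) \<bullet> i) has_derivative (\<lambda>h. DY (fst h) \<bullet> i)) (at z)"
    using has_derivative_compose[OF has_derivative_fst[OF has_derivative_ident] Y]
    by (auto intro!: derivative_eq_intros)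
  show "open {z::'a \<times> 'a. z \<bullet> z < a}"
    by (intro open_Collect_less continuous_intros)
  show "Y (fst w) \<bullet> i = cutoff_field a b Y w \<bullet> i" if "w \<in> {z. z \<bullet> z < a}" for w
    using that ab by (simp add: cutoff_field_eq)
qed (use z in simp)

lemma
  assumes "a < b" and "z \<bullet> z < a" and Y: "(Y has_derivative DY) (at (fst z))"
  shows Dx_cutoff_field: "Dx (\<lambda>z. cutoff_field a b Y z \<bullet> i) j z = DY j \<bullet> i"
    and Dv_cutoff_field: "Dv (\<lambda>z. cutoff_field a b Y z \<bullet> i) e z = 0"
proof -
  have "frechet_derivative (\<lambda>z. cutoff_field a b Y z \<bullet> i) (at z) = (\<lambda>h. DY (fst h) \<bullet> i)"
    using cutoff_field_has_derivative[OF assms] frechet_derivative_at by metis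
  moreover have "DY 0 = 0"
    using linear_0[OF has_derivative_linear[OF Y]] .
  ultimately show "Dx (\<lambda>z. cutoff_field a b Y z \<bullet> i) j z = DY j \<bullet> i"
    and "Dv (\<lambda>z. cutoff_field a b Y z \<bullet> i) e z = 0"
    by (simp_all add: Dx_def Dv_def)
qed

section \<open>The inward normal of a \<open>C\<^sup>2\<close> domain\<close>

lemma has_derivative_neg_eventually_at_right:
  fixes f :: "'a::real_normed_vector \<Rightarrow> real"
  assumes f: "(f has_derivative f') (at y)" and "f y \<le> 0" and "f' h < 0"
  shows "\<forall>\<^sub>F t in at_right 0. f (y + t *\<^sub>R h) < 0"
proof -
  have line: "((\<lambda>t. y + t *\<^sub>R h) has_derivative (\<lambda>t. t *\<^sub>R h)) (at 0)"
    by (auto intro!: derivative_eq_intros)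
  have "((\<lambda>t. f (y + t *\<^sub>R h)) has_derivative (\<lambda>t. f' (t *\<^sub>R h))) (at 0)"
    using has_derivative_compose[OF line, of f] f by simp
  then have "((\<lambda>t. f (y + t *\<^sub>R h)) has_real_derivative f' h) (at 0)"
    unfolding has_field_derivative_def
    by (rule has_derivative_eq_rhs)
       (simp add: fun_eq_iff linear_cmul[OF has_derivative_linear[OF f]] mult.commute)
  from DERIV_neg_dec_right[OF this \<open>f' h < 0\<close>] obtain d where "d > 0"
    and "\<And>t. 0 < t \<Longrightarrow> t < d \<Longrightarrow> f (y + t *\<^sub>R h) < f y"
    by auto
  then show ?thesis
    using \<open>f y \<le> 0\<close> unfolding eventually_at_right_field by force
qed

lemma local_defining_fn_has_derivative:
  "local_defining_fn \<Omega> x r \<rho> \<Longrightarrow> y \<in> ball x r \<Longrightarrow>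
    (\<rho> has_derivative frechet_derivative \<rho> (at y)) (at y)"
  unfolding local_defining_fn_def C2_on_def by (blast intro: C1_on_imp_has_derivative)

lemma local_defining_fn_frontier_zero:
  assumes "open \<Omega>" and L: "local_defining_fn \<Omega> x r \<rho>" and y: "y \<in> frontier \<Omega>" "y \<in> ball x r"
  shows "\<rho> y = 0"
proof -
  let ?S = "\<Omega> \<inter> ball x r"
  have S: "?S = {z \<in> ball x r. \<rho> z < 0}"
    using L by (simp add: local_defining_fn_def)
  have "y \<notin> \<Omega>"
    using \<open>open \<Omega>\<close> y by (simp add: frontier_def interior_open)
  then have not_neg: "\<not> \<rho> y < 0"
    using S y by blast
  have "y \<in> closure ?S"
    using open_Int_closure_subset[OF open_ball, of x r \<Omega>] y by (auto simp: frontier_def Int_commute)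
  then have "y islimpt ?S"
    using \<open>y \<notin> \<Omega>\<close> by (auto simp: closure_def)
  moreover have "(\<rho> \<longlongrightarrow> \<rho> y) (at y within ?S)"
    using has_derivative_continuous[OF local_defining_fn_has_derivative[OF L y(2)]]
    unfolding continuous_at by (rule tendsto_within_subset) simp
  moreover have "\<forall>\<^sub>F z in at y within ?S. \<rho> z \<le> 0"
    using S by (auto simp: eventually_at_filter less_imp_le)
  ultimately have "\<rho> y \<le> 0"
    by (intro tendsto_upperbound) (auto simp: trivial_limit_within)
  with not_neg show ?thesis
    by simp
qed

lemma unit_vectors_separated:
  fixes v w :: "'a::real_inner"
  assumes "norm v = 1" "norm w = 1" "v \<noteq> w"
  shows "v \<bullet> (v - w) > 0" and "w \<bullet> (v - w) < 0"
proof -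
  have vw: "v \<bullet> v = 1" "w \<bullet> w = 1"
    using assms(1,2) by (simp_all add: dot_square_norm)
  have "0 < (norm (v - w))\<^sup>2"
    using assms(3) by simp
  also have "(norm (v - w))\<^sup>2 = 2 - 2 * (v \<bullet> w)"
    using vw by (simp add: power2_norm_eq_inner algebra_simps inner_commute)
  finally show "v \<bullet> (v - w) > 0" and "w \<bullet> (v - w) < 0"
    using vw by (simp_all add: inner_diff_right inner_commute)
qed

lemma local_defining_fn_normal_unique:
  fixes \<Omega> :: "'a::euclidean_space set"
  assumes "open \<Omega>" and y: "y \<in> frontier \<Omega>"
    and L1: "local_defining_fn \<Omega> x1 r1 \<rho>1" "y \<in> ball x1 r1" and "c1 > 0" "norm v1 = 1"
    and D1: "\<forall>h. frechet_derivative \<rho>1 (at y) h = - c1 * (v1 \<bullet> h)"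
    and L2: "local_defining_fn \<Omega> x2 r2 \<rho>2" "y \<in> ball x2 r2" and "c2 > 0" "norm v2 = 1"
    and D2: "\<forall>h. frechet_derivative \<rho>2 (at y) h = - c2 * (v2 \<bullet> h)"
  shows "v1 = v2"
proof (rule ccontr)
  assume "v1 \<noteq> v2"
  define h where "h = v1 - v2"
  have h: "v1 \<bullet> h > 0" "v2 \<bullet> h < 0"
    unfolding h_def using unit_vectors_separated \<open>norm v1 = 1\<close> \<open>norm v2 = 1\<close> \<open>v1 \<noteq> v2\<close> by blast+
  have "frechet_derivative \<rho>1 (at y) = (\<lambda>h. - c1 * (v1 \<bullet> h))"
       "frechet_derivative \<rho>2 (at y) = (\<lambda>h. - c2 * (v2 \<bullet> h))"
    using D1 D2 by auto
  then have d1: "(\<rho>1 has_derivative (\<lambda>h. - c1 * (v1 \<bullet> h))) (at y)"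
    and d2: "((\<lambda>z. - \<rho>2 z) has_derivative (\<lambda>h. c2 * (v2 \<bullet> h))) (at y)"
    using local_defining_fn_has_derivative[OF L1] has_derivative_minus[OF local_defining_fn_has_derivative[OF L2]]
    by auto
  \<comment> \<open>Moving from \<open>y\<close> along \<open>v1 - v2\<close> enters \<open>\<Omega>\<close> according to \<open>\<rho>1\<close>
    but leaves it according to \<open>\<rho>2\<close>.\<close>
  have "\<forall>\<^sub>F t in at_right 0. \<rho>1 (y + t *\<^sub>R h) < 0"
    using has_derivative_neg_eventually_at_right[OF d1]
      local_defining_fn_frontier_zero[OF \<open>open \<Omega>\<close> L1(1) y L1(2)] \<open>c1 > 0\<close> h
    by (simp add: mult_pos_pos)
  moreover have "\<forall>\<^sub>F t in at_right 0. - \<rho>2 (y + t *\<^sub>R h) < 0"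
    using has_derivative_neg_eventually_at_right[OF d2]
      local_defining_fn_frontier_zero[OF \<open>open \<Omega>\<close> L2(1) y L2(2)] \<open>c2 > 0\<close> h
    by (simp add: mult_pos_neg)
  moreover have "((\<lambda>t. y + t *\<^sub>R h) \<longlongrightarrow> y + 0 *\<^sub>R h) (at_right 0)"
    by (intro tendsto_intros)
  then have "\<forall>\<^sub>F t in at_right 0. y + t *\<^sub>R h \<in> ball x1 r1 \<inter> ball x2 r2"
    using L1(2) L2(2) by (intro topological_tendstoD) auto
  ultimately have "\<forall>\<^sub>F t in at_right 0. \<rho>1 (y + t *\<^sub>R h) < 0 \<and> - \<rho>2 (y + t *\<^sub>R h) < 0
      \<and> y + t *\<^sub>R h \<in> ball x1 r1 \<inter> ball x2 r2"
    by (intro eventually_conj)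
  then obtain t where t: "\<rho>1 (y + t *\<^sub>R h) < 0" "\<rho>2 (y + t *\<^sub>R h) > 0"
    "y + t *\<^sub>R h \<in> ball x1 r1" "y + t *\<^sub>R h \<in> ball x2 r2"
    using eventually_happens'[OF trivial_limit_at_right_real] by auto
  have S1: "\<Omega> \<inter> ball x1 r1 = {z \<in> ball x1 r1. \<rho>1 z < 0}"
    and S2: "\<Omega> \<inter> ball x2 r2 = {z \<in> ball x2 r2. \<rho>2 z < 0}"
    using L1(1) L2(1) by (simp_all add: local_defining_fn_def)
  have "y + t *\<^sub>R h \<in> {z \<in> ball x1 r1. \<rho>1 z < 0}"
    using t by simp
  then have "y + t *\<^sub>R h \<in> {z \<in> ball x2 r2. \<rho>2 z < 0}"
    unfolding S1[symmetric] S2[symmetric] using t by simp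
  then show False
    using t by simp
qed

definition grad :: "('a::euclidean_space \<Rightarrow> real) \<Rightarrow> 'a \<Rightarrow> 'a" where
  "grad \<rho> z = (\<Sum>b\<in>Basis. frechet_derivative \<rho> (at z) b *\<^sub>R b)"

lemma frechet_derivative_eq_inner_grad:
  assumes "\<rho> differentiable (at z)"
  shows "frechet_derivative \<rho> (at z) h = grad \<rho> z \<bullet> h"
proof -
  have "frechet_derivative \<rho> (at z) h = frechet_derivative \<rho> (at z) (\<Sum>b\<in>Basis. (h \<bullet> b) *\<^sub>R b)"
    by (simp add: euclidean_representation)
  also have "\<dots> = (\<Sum>b\<in>Basis. (h \<bullet> b) * frechet_derivative \<rho> (at z) b)"
    using linear_frechet_derivative[OF assms] by (simp add: linear_sum linear_scale)
  also have "\<dots> = grad \<rho> z \<bullet> h"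
    by (simp add: grad_def inner_sum_right mult.commute inner_commute)
  finally show ?thesis .
qed

lemma continuous_on_grad: "C1_on U \<rho> \<Longrightarrow> continuous_on U (grad \<rho>)"
  unfolding grad_def C1_on_def by (intro continuous_intros) auto

lemma local_defining_fn_grad:
  assumes L: "local_defining_fn \<Omega> x r \<rho>" and y: "y \<in> ball x r"
  defines "n \<equiv> - (1 / norm (grad \<rho> y)) *\<^sub>R grad \<rho> y"
  shows "grad \<rho> y \<noteq> 0" and "norm n = 1"
    and "\<forall>h. frechet_derivative \<rho> (at y) h = - norm (grad \<rho> y) * (n \<bullet> h)"
proof -
  have D: "frechet_derivative \<rho> (at y) h = grad \<rho> y \<bullet> h" for h
    using frechet_derivative_eq_inner_grad local_defining_fn_has_derivative[OF L y]
    unfolding differentiable_def by blast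
  show g: "grad \<rho> y \<noteq> 0"
  proof
    assume "grad \<rho> y = 0"
    then have "frechet_derivative \<rho> (at y) = (\<lambda>_. 0)"
      using D by auto
    then show False
      using L y unfolding local_defining_fn_def by auto
  qed
  then show "norm n = 1"
    by (simp add: n_def)
  show "\<forall>h. frechet_derivative \<rho> (at y) h = - norm (grad \<rho> y) * (n \<bullet> h)"
    using g by (simp add: D n_def)
qed

lemma inward_normal_eq_grad:
  fixes \<Omega> :: "'a::euclidean_space set"
  assumes dom: "C2_domain \<Omega>" and L: "local_defining_fn \<Omega> x r \<rho>"
    and y: "y \<in> frontier \<Omega>" "y \<in> ball x r"
  shows "inward_normal \<Omega> y = - (1 / norm (grad \<rho> y)) *\<^sub>R grad \<rho> y"
proof -
  let ?P = "\<lambda>v. norm v = 1 \<and> (\<exists>r \<rho>. local_defining_fn \<Omega> y r \<rho> \<and>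
      (\<exists>c>0. \<forall>h. frechet_derivative \<rho> (at y) h = - c * (v \<bullet> h)))"
  obtain r0 \<rho>0 where L0: "local_defining_fn \<Omega> y r0 \<rho>0"
    using dom y unfolding C2_domain_def by blast
  then have "y \<in> ball y r0"
    by (simp add: local_defining_fn_def)
  note grad0 = local_defining_fn_grad[OF L0 this]
  have "?P (- (1 / norm (grad \<rho>0 y)) *\<^sub>R grad \<rho>0 y)"
  proof (intro conjI exI)
    show "local_defining_fn \<Omega> y r0 \<rho>0" by (rule L0)
    show "0 < norm (grad \<rho>0 y)" using grad0(1) by simp
  qed (use grad0 in auto)
  then have "?P (inward_normal \<Omega> y)"
    unfolding inward_normal_def by (rule someI)
  then obtain r' \<rho>' c' where L': "local_defining_fn \<Omega> y r' \<rho>'" and "c' > 0"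
    and "norm (inward_normal \<Omega> y) = 1"
    and "\<forall>h. frechet_derivative \<rho>' (at y) h = - c' * (inward_normal \<Omega> y \<bullet> h)"
    by blast
  moreover have "y \<in> ball y r'"
    using L' by (simp add: local_defining_fn_def)
  moreover have "open \<Omega>"
    using dom by (simp add: C2_domain_def)
  moreover note grad = local_defining_fn_grad[OF L y(2)]
  moreover have "norm (grad \<rho> y) > 0"
    using grad(1) by simp
  ultimately show ?thesis
    by (intro local_defining_fn_normal_unique[OF _ y(1) L' _ _ _ _ L y(2)])
qed

lemma
  fixes \<Omega> :: "'a::euclidean_space set"
  assumes dom: "C2_domain \<Omega>"
  shows norm_inward_normal: "y \<in> frontier \<Omega> \<Longrightarrow> norm (inward_normal \<Omega> y) = 1"
    and continuous_on_inward_normal: "continuous_on (frontier \<Omega>) (inward_normal \<Omega>)"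
proof -
  show "norm (inward_normal \<Omega> y) = 1" if y: "y \<in> frontier \<Omega>" for y
  proof -
    obtain r \<rho> where L: "local_defining_fn \<Omega> y r \<rho>"
      using dom y unfolding C2_domain_def by blast
    then have "y \<in> ball y r"
      by (simp add: local_defining_fn_def)
    then show ?thesis
      using inward_normal_eq_grad[OF dom L y] local_defining_fn_grad(2)[OF L] by simp
  qed
  show "continuous_on (frontier \<Omega>) (inward_normal \<Omega>)"
    unfolding continuous_on_eq_continuous_within
  proof
    fix y assume y: "y \<in> frontier \<Omega>"
    obtain r \<rho> where L: "local_defining_fn \<Omega> y r \<rho>"
      using dom y unfolding C2_domain_def by blast
    then have r: "r > 0" and "continuous_on (ball y r) (grad \<rho>)"
      by (auto simp: local_defining_fn_def C2_on_def intro: continuous_on_grad)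
    moreover have "grad \<rho> y \<noteq> 0"
      using local_defining_fn_grad(1)[OF L] r by simp
    ultimately have "isCont (\<lambda>z. - (1 / norm (grad \<rho> z)) *\<^sub>R grad \<rho> z) y"
      by (intro continuous_intros) (auto simp: continuous_on_eq_continuous_at)
    then have "continuous (at y within frontier \<Omega>) (\<lambda>z. - (1 / norm (grad \<rho> z)) *\<^sub>R grad \<rho> z)"
      by (rule continuous_at_imp_continuous_within)
    then show "continuous (at y within frontier \<Omega>) (inward_normal \<Omega>)"
      by (rule continuous_transform_within[OF _ r y])
         (simp add: inward_normal_eq_grad[OF dom L] dist_commute)
  qed
qed

section \<open>The capillary bundle and the conormal\<close>

lemma C1_on_surface_imp_continuous_on:
  assumes "C1_on_surface S \<beta>"
  shows "continuous_on S \<beta>"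
proof -
  obtain U b where "open U" "S \<subseteq> U" "C1_on U b" "\<forall>x\<in>S. b x = \<beta> x"
    using assms by (auto simp: C1_on_surface_def)
  then show ?thesis
    using C1_on_imp_continuous_on continuous_on_subset continuous_on_cong by metis
qed

lemma sin_bounded_below_on_compact:
  fixes \<beta> :: "'a::metric_space \<Rightarrow> real"
  assumes "compact S" "continuous_on S \<beta>" "\<forall>x\<in>S. 0 < \<beta> x \<and> \<beta> x < pi"
  obtains c where "c > 0" "\<forall>x\<in>S. c \<le> sin (\<beta> x)"
proof (cases "S = {}")
  case False
  have "continuous_on S (\<lambda>x. sin (\<beta> x))"
    using assms(2) by (intro continuous_intros)
  then obtain x0 where "x0 \<in> S" "\<forall>x\<in>S. sin (\<beta> x0) \<le> sin (\<beta> x)"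
    using continuous_attains_inf[OF assms(1) False] by blast
  moreover have "sin (\<beta> x0) > 0"
    using assms(3) \<open>x0 \<in> S\<close> by (auto intro: sin_gt_zero)
  ultimately show thesis
    using that by blast
qed (use that[of 1] in auto)

lemma vperp_inner_self:
  assumes "norm v = 1"
  shows "vperp v u \<bullet> u = (norm (vperp v u))\<^sup>2"
    and "(norm (vperp v u))\<^sup>2 = (norm u)\<^sup>2 - (u \<bullet> v)\<^sup>2"
proof -
  have "v \<bullet> v = 1"
    using assms by (simp add: dot_square_norm)
  then show "vperp v u \<bullet> u = (norm (vperp v u))\<^sup>2"
    and "(norm (vperp v u))\<^sup>2 = (norm u)\<^sup>2 - (u \<bullet> v)\<^sup>2"
    unfolding power2_norm_eq_inner vperp_def
    by (simp_all add: inner_diff_left inner_diff_right inner_commute power2_eq_square)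
qed

lemma
  fixes \<Omega> :: "'a::euclidean_space set"
  assumes dom: "C2_domain \<Omega>" and \<beta>: "\<forall>x\<in>frontier \<Omega>. 0 < \<beta> x \<and> \<beta> x < pi"
    and z: "(x, v) \<in> capillary_bundle \<Omega> \<beta>"
  shows norm_vperp_inward_normal: "norm (vperp v (inward_normal \<Omega> x)) = sin (\<beta> x)"
    and norm_conormal: "norm (conormal \<Omega> \<beta> (x, v)) = 1"
    and conormal_inner_inward_normal: "conormal \<Omega> \<beta> (x, v) \<bullet> inward_normal \<Omega> x = sin (\<beta> x)"
proof -
  let ?n = "inward_normal \<Omega> x"
  have x: "x \<in> frontier \<Omega>" and v: "norm v = 1" and cos: "\<bar>v \<bullet> ?n\<bar> = \<bar>cos (\<beta> x)\<bar>"
    using z by (auto simp: capillary_bundle_def capillary_fibre_def)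
  have sin: "sin (\<beta> x) > 0"
    using \<beta> x by (auto intro: sin_gt_zero)
  have "(norm (vperp v ?n))\<^sup>2 = 1 - (cos (\<beta> x))\<^sup>2"
    using vperp_inner_self(2)[OF v] norm_inward_normal[OF dom x] cos
    by (metis inner_commute power2_abs power_one)
  also have "\<dots> = (sin (\<beta> x))\<^sup>2"
    by (simp add: sin_squared_eq)
  finally show norm_vperp: "norm (vperp v ?n) = sin (\<beta> x)"
    using sin by (simp add: power2_eq_iff_nonneg)
  have conormal: "conormal \<Omega> \<beta> (x, v) = (1 / sin (\<beta> x)) *\<^sub>R vperp v ?n"
    using z norm_vperp by (simp add: conormal_def)
  show "norm (conormal \<Omega> \<beta> (x, v)) = 1"
    using sin by (simp add: conormal norm_vperp)
  show "conormal \<Omega> \<beta> (x, v) \<bullet> ?n = sin (\<beta> x)"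
    using sin by (simp add: conormal vperp_inner_self(1)[OF v] norm_vperp power2_eq_square)
qed

lemma norm_conormal_le: "norm (conormal \<Omega> \<beta> z) \<le> 1"
  unfolding conormal_def by (auto simp: case_prod_beta Let_def)

lemma closed_capillary_bundle:
  fixes \<Omega> :: "'a::euclidean_space set"
  assumes dom: "C2_domain \<Omega>" and \<beta>: "continuous_on (frontier \<Omega>) \<beta>"
  shows "closed (capillary_bundle \<Omega> \<beta>)"
proof -
  let ?S = "frontier \<Omega> \<times> sphere (0::'a) 1"
  let ?f = "\<lambda>z::'a \<times> 'a. \<bar>snd z \<bullet> inward_normal \<Omega> (fst z)\<bar> - \<bar>cos (\<beta> (fst z))\<bar>"
  have "fst ` ?S \<subseteq> frontier \<Omega>"
    by auto
  then have "continuous_on ?S (\<lambda>z. inward_normal \<Omega> (fst z))" "continuous_on ?S (\<lambda>z. \<beta> (fst z))"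
    using continuous_on_compose2[OF continuous_on_inward_normal[OF dom] continuous_on_fst[OF continuous_on_id]]
      continuous_on_compose2[OF \<beta> continuous_on_fst[OF continuous_on_id]]
    by blast+
  then have "continuous_on ?S ?f"
    by (intro continuous_intros)
  then have "closed (?S \<inter> ?f -` {0})"
    by (rule continuous_closed_preimage) (auto intro: closed_Times)
  moreover have "capillary_bundle \<Omega> \<beta> = ?S \<inter> ?f -` {0}"
    by (auto simp: capillary_bundle_def capillary_fibre_def)
  ultimately show ?thesis
    by simp
qed

lemma conormal_borel_measurable:
  fixes \<Omega> :: "'a::euclidean_space set"
  assumes dom: "C2_domain \<Omega>" and \<beta>: "continuous_on (frontier \<Omega>) \<beta>"
    and \<beta>_range: "\<forall>x\<in>frontier \<Omega>. 0 < \<beta> x \<and> \<beta> x < pi"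
  shows "conormal \<Omega> \<beta> \<in> borel_measurable borel"
proof -
  let ?B = "capillary_bundle \<Omega> \<beta>"
  let ?w = "\<lambda>z::'a \<times> 'a. vperp (snd z) (inward_normal \<Omega> (fst z))"
  have "fst ` ?B \<subseteq> frontier \<Omega>"
    by (auto simp: capillary_bundle_def)
  then have "continuous_on ?B (\<lambda>z. inward_normal \<Omega> (fst z))"
    using continuous_on_compose2[OF continuous_on_inward_normal[OF dom] continuous_on_fst[OF continuous_on_id]]
    by blast
  then have "continuous_on ?B ?w"
    unfolding vperp_def by (intro continuous_intros)
  moreover have "?w z \<noteq> 0" if "z \<in> ?B" for z
    using that norm_vperp_inward_normal[OF dom \<beta>_range, of "fst z" "snd z"] \<beta>_range sin_gt_zero
    by (fastforce simp: capillary_bundle_def)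
  ultimately have "continuous_on ?B (\<lambda>z. (1 / norm (?w z)) *\<^sub>R ?w z)"
    by (intro continuous_intros) auto
  moreover have "?B \<in> sets borel"
    using closed_capillary_bundle[OF dom \<beta>] by (simp add: borel_closed)
  ultimately have "(\<lambda>z. indicator ?B z *\<^sub>R ((1 / norm (?w z)) *\<^sub>R ?w z)) \<in> borel_measurable borel"
    using borel_measurable_continuous_on_indicator by blast
  moreover have "conormal \<Omega> \<beta> = (\<lambda>z. indicator ?B z *\<^sub>R ((1 / norm (?w z)) *\<^sub>R ?w z))"
    by (auto simp: conormal_def indicator_def fun_eq_iff)
  ultimately show ?thesis
    by simp
qed

section \<open>The first variation density\<close>

lemma frob_nonneg: "0 \<le> frob W z"
  unfolding frob_def by (auto intro!: sum_nonneg)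

lemma abs_le_frob:
  assumes "i \<in> Basis" "a \<in> Basis"
  shows "\<bar>W z i a\<bar> \<le> frob W z"
proof -
  have "(W z i a)\<^sup>2 \<le> (\<Sum>a\<in>Basis. (W z i a)\<^sup>2)"
    using assms by (intro member_le_sum) auto
  also have "\<dots> \<le> (\<Sum>i\<in>Basis. \<Sum>a\<in>Basis. (W z i a)\<^sup>2)"
    using assms by (intro member_le_sum[where f="\<lambda>i. \<Sum>a\<in>Basis. (W z i a)\<^sup>2"]) (auto intro: sum_nonneg)
  finally show ?thesis
    unfolding frob_def by (metis real_sqrt_abs real_sqrt_le_mono)
qed

definition first_variation_density ::
    "('a::euclidean_space \<times> 'a \<Rightarrow> 'a \<Rightarrow> 'a \<Rightarrow> real) \<Rightarrow> ('a \<times> 'a \<Rightarrow> 'a) \<Rightarrow> 'a \<times> 'a \<Rightarrow> real" where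
  "first_variation_density W \<Psi> z = (\<Sum>i\<in>Basis. curv_integrand W (\<lambda>z. \<Psi> z \<bullet> i) i z)"

text \<open>The divergence of \<open>x \<mapsto> \<Psi> (x, v)\<close> along the hyperplane \<open>v\<^sup>\<bottom>\<close>: the first term of
  the curvature identity summed over \<open>i\<close>.\<close>

definition tangential_divergence :: "('a::euclidean_space \<times> 'a \<Rightarrow> 'a) \<Rightarrow> 'a \<times> 'a \<Rightarrow> real" where
  "tangential_divergence \<Psi> z = (\<Sum>i\<in>Basis. \<Sum>j\<in>Basis.
     ((if i = j then 1 else 0) - (snd z \<bullet> i) * (snd z \<bullet> j)) * Dx (\<lambda>z. \<Psi> z \<bullet> i) j z)"

lemma abs_curvature_trace_le:
  fixes W :: "'a \<times> 'a \<Rightarrow> 'a::euclidean_space \<Rightarrow> 'a \<Rightarrow> real"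
  assumes v: "norm v = 1" and i: "i \<in> Basis"
  shows "\<bar>\<Sum>r\<in>Basis. W z r r * (v \<bullet> i) + W z r i * (v \<bullet> r)\<bar> \<le> 2 * real DIM('a) * frob W z"
proof -
  have "\<bar>W z r r * (v \<bullet> i) + W z r i * (v \<bullet> r)\<bar> \<le> 2 * frob W z" if r: "r \<in> Basis" for r
  proof -
    have "\<bar>v \<bullet> i\<bar> \<le> 1" "\<bar>v \<bullet> r\<bar> \<le> 1"
      using Basis_le_norm[OF i, of v] Basis_le_norm[OF r, of v] v by (simp_all add: inner_commute)
    then have "\<bar>W z r r\<bar> * \<bar>v \<bullet> i\<bar> \<le> frob W z * 1" "\<bar>W z r i\<bar> * \<bar>v \<bullet> r\<bar> \<le> frob W z * 1"
      using abs_le_frob[OF r r] abs_le_frob[OF r i] frob_nonneg[of W z] by (intro mult_mono; simp)+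
    then show ?thesis
      unfolding abs_mult[symmetric] by linarith
  qed
  then have "\<bar>\<Sum>r\<in>Basis. W z r r * (v \<bullet> i) + W z r i * (v \<bullet> r)\<bar> \<le> (\<Sum>r\<in>(Basis::'a set). 2 * frob W z)"
    by (intro order_trans[OF sum_abs] sum_mono)
  then show ?thesis
    by simp
qed

lemma first_variation_density_tangential:
  fixes W :: "'a \<times> 'a \<Rightarrow> 'a::euclidean_space \<Rightarrow> 'a \<Rightarrow> real"
  assumes v: "norm (snd z) = 1" and Dv: "\<forall>i\<in>Basis. \<forall>a\<in>Basis. Dv (\<lambda>z. \<Psi> z \<bullet> i) a z = 0"
  shows "\<bar>first_variation_density W \<Psi> z - tangential_divergence \<Psi> z\<bar>
    \<le> 2 * real DIM('a)^2 * norm (\<Psi> z) * frob W z"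
proof -
  let ?T = "\<lambda>i. \<Sum>r\<in>Basis. W z r r * (snd z \<bullet> i) + W z r i * (snd z \<bullet> r)"
  have "(\<Sum>a\<in>Basis. W z i a * Dv (\<lambda>z. \<Psi> z \<bullet> i) a z) = 0" if "i \<in> Basis" for i
    using Dv that by (intro sum.neutral) simp
  then have "first_variation_density W \<Psi> z - tangential_divergence \<Psi> z
      = - (\<Sum>i\<in>Basis. ?T i * (\<Psi> z \<bullet> i))"
    by (simp add: first_variation_density_def tangential_divergence_def curv_integrand_def Let_def
        sum_subtractf sum_negf)
  also have "\<bar>\<dots>\<bar> \<le> (\<Sum>i\<in>(Basis::'a set). 2 * real DIM('a) * frob W z * norm (\<Psi> z))"
    unfolding abs_minus_cancel
  proof (intro order_trans[OF sum_abs] sum_mono)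
    fix i :: 'a assume i: "i \<in> Basis"
    show "\<bar>?T i * (\<Psi> z \<bullet> i)\<bar> \<le> 2 * real DIM('a) * frob W z * norm (\<Psi> z)"
      unfolding abs_mult using abs_curvature_trace_le[OF v i] Basis_le_norm[OF i, of "\<Psi> z"]
      by (intro mult_mono) (auto simp: inner_commute frob_nonneg)
  qed
  finally show ?thesis
    by (simp add: power2_eq_square mult_ac)
qed

lemma first_variation_density_cutoff_field_ge:
  fixes z :: "'a::euclidean_space \<times> 'a"
  assumes "a < b" "z \<bullet> z < a" "norm (snd z) = 1" "Y differentiable (at (fst z))"
  shows "tangential_divergence (cutoff_field a b Y) z - 2 * real DIM('a)^2 * norm (Y (fst z)) * frob W z
    \<le> first_variation_density W (cutoff_field a b Y) z"
proof -
  obtain DY where "(Y has_derivative DY) (at (fst z))"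
    using assms(4) by (auto simp: differentiable_def)
  then have "\<forall>i\<in>Basis. \<forall>e\<in>Basis. Dv (\<lambda>z. cutoff_field a b Y z \<bullet> i) e z = 0"
    using Dv_cutoff_field[OF assms(1,2)] by blast
  from abs_le_D2[OF first_variation_density_tangential[OF assms(3) this, of W]]
  have "tangential_divergence (cutoff_field a b Y) z - first_variation_density W (cutoff_field a b Y) z
      \<le> 2 * real DIM('a)^2 * norm (Y (fst z)) * frob W z"
    using assms(1,2) by (simp add: cutoff_field_eq)
  then show ?thesis
    by linarith
qed

lemma tangential_divergence_cutoff_field_id:
  fixes z :: "'a::euclidean_space \<times> 'a"
  assumes "a < b" "z \<bullet> z < a" "norm (snd z) = 1"
  shows "tangential_divergence (cutoff_field a b (\<lambda>x. x)) z = real DIM('a) - 1"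
proof -
  let ?v = "snd z"
  have row: "(\<Sum>j\<in>Basis. ((if i = j then 1 else 0) - (?v \<bullet> i) * (?v \<bullet> j)) * (j \<bullet> i))
      = 1 - (?v \<bullet> i)\<^sup>2" if i: "i \<in> Basis" for i
  proof -
    have "(\<Sum>j\<in>Basis. ((if i = j then 1 else 0) - (?v \<bullet> i) * (?v \<bullet> j)) * (j \<bullet> i))
        = (\<Sum>j\<in>Basis. if j = i then 1 - (?v \<bullet> i) * (?v \<bullet> j) else 0)"
      using i by (intro sum.cong refl) (auto simp: inner_Basis)
    also have "\<dots> = 1 - (?v \<bullet> i)\<^sup>2"
      using i by (simp add: power2_eq_square)
    finally show ?thesis .
  qed
  have "tangential_divergence (cutoff_field a b (\<lambda>x. x)) z
      = (\<Sum>i\<in>Basis. \<Sum>j\<in>Basis. ((if i = j then 1 else 0) - (?v \<bullet> i) * (?v \<bullet> j)) * (j \<bullet> i))"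
    unfolding tangential_divergence_def using Dx_cutoff_field[OF assms(1,2) has_derivative_ident] by simp
  also have "\<dots> = (\<Sum>i\<in>(Basis::'a set). 1 - (?v \<bullet> i)\<^sup>2)"
    using row by simp
  also have "\<dots> = real DIM('a) - (\<Sum>i\<in>(Basis::'a set). (?v \<bullet> i)\<^sup>2)"
    by (simp add: sum_subtractf)
  also have "(\<Sum>i\<in>(Basis::'a set). (?v \<bullet> i)\<^sup>2) = ?v \<bullet> ?v"
    by (simp add: euclidean_inner[of ?v ?v] power2_eq_square)
  also have "?v \<bullet> ?v = 1"
    using assms(3) by (simp add: dot_square_norm)
  finally show ?thesis .
qed

lemma continuous_on_tangential_divergence:
  "\<forall>i\<in>Basis. C1c (\<lambda>z. \<Psi> z \<bullet> i) \<Longrightarrow> continuous_on UNIV (tangential_divergence \<Psi>)"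
  unfolding tangential_divergence_def by (intro continuous_intros) (auto dest: C1c_continuous_on(2))

lemma first_variation_density_position_ge:
  fixes z :: "'a::euclidean_space \<times> 'a"
  assumes "a < b" "z \<bullet> z < a" "norm (snd z) = 1" "norm (fst z) \<le> d"
  shows "real DIM('a) - 1 - 2 * real DIM('a)^2 * d * frob W z
    \<le> first_variation_density W (cutoff_field a b (\<lambda>x. x)) z"
  using first_variation_density_cutoff_field_ge[OF assms(1-3), of "\<lambda>x. x" W]
    tangential_divergence_cutoff_field_id[OF assms(1-3)] frob_nonneg[of W z]
    mult_right_mono[OF assms(4), of "2 * real DIM('a)^2 * frob W z"]
  by (simp add: mult_ac)

lemma cutoff_field_bounded_on_compact:
  assumes ab: "a < b" and Y: "polynomial_function Y" and "compact K"
  obtains B where "0 < B"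
    "\<And>z. z \<in> K \<Longrightarrow> \<bar>tangential_divergence (cutoff_field a b Y) z\<bar> + norm (Y (fst z)) \<le> B"
proof -
  let ?f = "\<lambda>z. \<bar>tangential_divergence (cutoff_field a b Y) z\<bar> + norm (Y (fst z))"
  have "continuous_on UNIV (\<lambda>z::'a \<times> 'a. Y (fst z))"
    using continuous_on_compose[OF continuous_on_fst[OF continuous_on_id]
        continuous_on_subset[OF continuous_on_polymonial_function[OF Y] subset_UNIV]]
    by (simp add: o_def)
  then have "continuous_on UNIV ?f"
    using continuous_on_tangential_divergence[OF C1c_cutoff_field[OF ab Y]]
    by (intro continuous_on_add continuous_on_rabs continuous_on_norm)
  then have "bounded (?f ` K)"
    using compact_continuous_image[OF continuous_on_subset[OF _ subset_UNIV] \<open>compact K\<close>]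
    by (blast intro: compact_imp_bounded)
  then obtain B where "0 < B" and B: "\<forall>y\<in>?f ` K. norm y \<le> B"
    by (meson bounded_pos)
  moreover have "?f z \<le> B" if "z \<in> K" for z
    using B that by fastforce
  ultimately show thesis
    using that by blast
qed

lemma cutoff_field_first_variation_bounded:
  assumes ab: "a < b" and Y: "polynomial_function Y" and "compact K"
    and K: "\<And>z. z \<in> K \<Longrightarrow> z \<bullet> z < a \<and> norm (snd z) = 1"
  obtains B where "0 \<le> B"
    "\<And>W z. z \<in> K \<Longrightarrow> - B - B * frob W z \<le> first_variation_density W (cutoff_field a b Y) z"
proof -
  obtain B where B0: "0 < B" and B: "\<And>z. z \<in> K \<Longrightarrow>
      \<bar>tangential_divergence (cutoff_field a b Y) z\<bar> + norm (Y (fst z)) \<le> B"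
    using cutoff_field_bounded_on_compact[OF ab Y \<open>compact K\<close>] by blast
  have "1 \<le> real DIM('a)"
    using DIM_positive[where 'a='a] by linarith
  then have "1 \<le> 2 * real DIM('a)^2"
    using one_le_power[of "real DIM('a)" 2] by linarith
  then have "1 * B \<le> 2 * real DIM('a)^2 * B"
    using B0 by (simp add: mult_right_mono)
  show thesis
  proof (rule that[of "2 * real DIM('a)^2 * B"])
    show "0 \<le> 2 * real DIM('a)^2 * B"
      using B0 by simp
    fix W z
    assume z: "z \<in> K"
    have "tangential_divergence (cutoff_field a b Y) z - 2 * real DIM('a)^2 * norm (Y (fst z)) * frob W z
        \<le> first_variation_density W (cutoff_field a b Y) z"
      using K[OF z] differentiable_at_polynomial_function[OF Y]
      by (intro first_variation_density_cutoff_field_ge ab) auto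
    moreover have "2 * real DIM('a)^2 * norm (Y (fst z)) * frob W z \<le> 2 * real DIM('a)^2 * B * frob W z"
      using B[OF z] frob_nonneg[of W z] by (intro mult_right_mono mult_left_mono) auto
    moreover have "- B \<le> tangential_divergence (cutoff_field a b Y) z"
      using B[OF z] abs_ge_minus_self[of "tangential_divergence (cutoff_field a b Y) z"]
        norm_ge_zero[of "Y (fst z)"]
      by linarith
    ultimately show "- (2 * real DIM('a)^2 * B) - 2 * real DIM('a)^2 * B * frob W z
        \<le> first_variation_density W (cutoff_field a b Y) z"
      using \<open>1 * B \<le> 2 * real DIM('a)^2 * B\<close> by linarith
  qed
qed

lemma integrable_C1c_mult_conormal:
  assumes \<Gamma>: "finite_measure \<Gamma>" "sets \<Gamma> = sets borel"
    and conormal: "conormal \<Omega> \<beta> \<in> borel_measurable borel"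
    and \<phi>: "C1c \<phi>" and i: "i \<in> Basis"
  shows "integrable \<Gamma> (\<lambda>z. \<phi> z * (conormal \<Omega> \<beta> z \<bullet> i))"
proof -
  interpret finite_measure \<Gamma> by (rule \<Gamma>(1))
  obtain B where B: "\<And>z. \<bar>\<phi> z\<bar> \<le> B"
    using C1c_bounded[OF \<phi>] by blast
  note [measurable] = borel_measurable_continuous_onI[OF C1c_continuous_on(1)[OF \<phi>]] conormal
  have "(\<lambda>z. \<phi> z * (conormal \<Omega> \<beta> z \<bullet> i)) \<in> borel_measurable borel"
    by measurable
  then have "(\<lambda>z. \<phi> z * (conormal \<Omega> \<beta> z \<bullet> i)) \<in> borel_measurable \<Gamma>"
    by (simp add: measurable_cong_sets[OF \<Gamma>(2) refl])
  moreover have "norm (\<phi> z * (conormal \<Omega> \<beta> z \<bullet> i)) \<le> B" for z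
  proof -
    have "\<bar>conormal \<Omega> \<beta> z \<bullet> i\<bar> \<le> 1"
      using Basis_le_norm[OF i] norm_conormal_le order_trans by blast
    then show ?thesis
      using B[of z] mult_mono[of "\<bar>\<phi> z\<bar>" B "\<bar>conormal \<Omega> \<beta> z \<bullet> i\<bar>" 1]
      by (simp add: abs_mult)
  qed
  ultimately show ?thesis
    by (intro integrable_const_bound[where B=B]) auto
qed

lemma first_variation_identity:
  fixes \<Psi> :: "'a::euclidean_space \<times> 'a \<Rightarrow> 'a"
  assumes curv: "has_capillary_curvature \<Omega> \<beta> V \<Gamma> W"
    and \<Psi>: "\<forall>i\<in>Basis. C1c (\<lambda>z. \<Psi> z \<bullet> i)"
    and \<Gamma>: "finite_measure \<Gamma>" "sets \<Gamma> = sets borel"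
    and conormal: "conormal \<Omega> \<beta> \<in> borel_measurable borel"
  shows "integrable (completion V) (first_variation_density W \<Psi>)"
    and "integrable \<Gamma> (\<lambda>z. \<Psi> z \<bullet> conormal \<Omega> \<beta> z)"
    and "(\<integral>z. first_variation_density W \<Psi> z \<partial>completion V) = - (\<integral>z. \<Psi> z \<bullet> conormal \<Omega> \<beta> z \<partial>\<Gamma>)"
proof -
  let ?g = "\<lambda>i z. (\<Psi> z \<bullet> i) * (conormal \<Omega> \<beta> z \<bullet> i)"
  have V: "integrable (completion V) (curv_integrand W (\<lambda>z. \<Psi> z \<bullet> i) i)"
    and eq: "(\<integral>z. curv_integrand W (\<lambda>z. \<Psi> z \<bullet> i) i z \<partial>completion V) = - (\<integral>z. ?g i z \<partial>\<Gamma>)"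
    if "i \<in> Basis" for i
    using curv \<Psi> that unfolding has_capillary_curvature_def by blast+
  have G: "integrable \<Gamma> (?g i)" if "i \<in> Basis" for i
    using integrable_C1c_mult_conormal[OF \<Gamma> conormal] \<Psi> that by blast
  have inner: "\<Psi> z \<bullet> conormal \<Omega> \<beta> z = (\<Sum>i\<in>Basis. ?g i z)" for z
    by (rule euclidean_inner)
  show "integrable (completion V) (first_variation_density W \<Psi>)"
    unfolding first_variation_density_def[abs_def] by (rule Bochner_Integration.integrable_sum) (rule V)
  show "integrable \<Gamma> (\<lambda>z. \<Psi> z \<bullet> conormal \<Omega> \<beta> z)"
    unfolding inner by (rule Bochner_Integration.integrable_sum) (rule G)
  show "(\<integral>z. first_variation_density W \<Psi> z \<partial>completion V) = - (\<integral>z. \<Psi> z \<bullet> conormal \<Omega> \<beta> z \<partial>\<Gamma>)"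
    unfolding first_variation_density_def inner using V G eq
    by (simp add: Bochner_Integration.integral_sum sum_negf)
qed

section \<open>Curvature in \<open>L\<^sup>p\<close>\<close>

lemma le_eps_add_powr:
  fixes x e p :: real
  assumes "0 \<le> x" "0 < e" "1 \<le> p"
  shows "x \<le> e + e powr (1 - p) * x powr p"
proof (cases "x \<le> e")
  case True
  have "0 \<le> e powr (1 - p) * x powr p"
    by simp
  then show ?thesis
    using True by linarith
next
  case False
  then have "1 \<le> x / e"
    using assms by simp
  have "x / e = (x / e) powr 1"
    using assms by simp
  also have "\<dots> \<le> (x / e) powr p"
    using \<open>1 \<le> x / e\<close> assms by (intro powr_mono) auto
  also have "\<dots> = x powr p / e powr p"
    using assms by (simp add: powr_divide)
  finally have "x \<le> e * (x powr p / e powr p)"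
    using assms by (simp add: divide_le_eq mult.commute)
  also have "\<dots> = e powr (1 - p) * x powr p"
    using assms by (simp add: powr_diff field_simps)
  finally show ?thesis
    using assms(2) by (smt (verit) powr_ge_zero)
qed

lemma frob_powr_le:
  fixes W :: "'a \<times> 'a \<Rightarrow> 'a::euclidean_space \<Rightarrow> 'a \<Rightarrow> real"
  assumes "0 \<le> p"
  shows "frob W z powr p \<le> real DIM('a) powr p * (\<Sum>i\<in>Basis. \<Sum>a\<in>Basis. \<bar>W z i a\<bar> powr p)"
proof -
  let ?A = "(\<lambda>(i, a). \<bar>W z i a\<bar>) ` ((Basis::'a set) \<times> Basis)"
  obtain i0 a0 where ia: "i0 \<in> Basis" "a0 \<in> Basis" and max: "Max ?A = \<bar>W z i0 a0\<bar>"
    using Max_in[of ?A] by fastforce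
  have le_max: "\<bar>W z i a\<bar> \<le> \<bar>W z i0 a0\<bar>" if "i \<in> Basis" "a \<in> Basis" for i a
    using Max_ge[of ?A "\<bar>W z i a\<bar>"] that max by force
  have "(\<Sum>i\<in>(Basis::'a set). \<Sum>a\<in>(Basis::'a set). (W z i a)\<^sup>2)
      \<le> (\<Sum>i\<in>(Basis::'a set). \<Sum>a\<in>(Basis::'a set). (W z i0 a0)\<^sup>2)"
    using le_max by (intro sum_mono) (simp add: abs_le_square_iff)
  also have "\<dots> = (real DIM('a) * \<bar>W z i0 a0\<bar>)\<^sup>2"
    by (simp add: power2_eq_square)
  finally have "frob W z \<le> sqrt ((real DIM('a) * \<bar>W z i0 a0\<bar>)\<^sup>2)"
    unfolding frob_def by (rule real_sqrt_le_mono)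
  then have "frob W z \<le> real DIM('a) * \<bar>W z i0 a0\<bar>"
    by simp
  then have "frob W z powr p \<le> (real DIM('a) * \<bar>W z i0 a0\<bar>) powr p"
    using assms frob_nonneg[of W z] by (intro powr_mono2) auto
  also have "\<dots> = real DIM('a) powr p * \<bar>W z i0 a0\<bar> powr p"
    by (simp add: powr_mult)
  also have "\<bar>W z i0 a0\<bar> powr p \<le> (\<Sum>a\<in>Basis. \<bar>W z i0 a\<bar> powr p)"
    using ia by (intro member_le_sum) auto
  also have "\<dots> \<le> (\<Sum>i\<in>Basis. \<Sum>a\<in>Basis. \<bar>W z i a\<bar> powr p)"
    using ia by (intro member_le_sum[where f="\<lambda>i. \<Sum>a\<in>Basis. \<bar>W z i a\<bar> powr p"]) (auto intro: sum_nonneg)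
  finally show ?thesis
    by (simp add: mult_left_mono)
qed

lemma frob_borel_measurable:
  assumes "curvature_in_Lp p V W"
  shows "frob W \<in> borel_measurable (completion V)"
proof -
  have "(\<lambda>z. \<Sum>i\<in>Basis. \<Sum>a\<in>Basis. (W z i a)\<^sup>2) \<in> borel_measurable (completion V)"
    using assms by (auto simp: curvature_in_Lp_def intro!: borel_measurable_sum borel_measurable_power)
  then show ?thesis
    unfolding frob_def[abs_def] by measurable
qed

lemma integrable_frob_powr:
  fixes V :: "('a::euclidean_space \<times> 'a) measure"
  assumes V: "finite_measure (completion V)" and Lp: "curvature_in_Lp p V W" and p: "0 \<le> p"
  shows "integrable (completion V) (\<lambda>z. frob W z powr p)"
proof (rule Bochner_Integration.integrable_bound)
  interpret finite_measure "completion V" by (rule V)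
  show "integrable (completion V) (\<lambda>z. real DIM('a) powr p * (\<Sum>i\<in>Basis. \<Sum>a\<in>Basis. \<bar>W z i a\<bar> powr p))"
    using Lp by (intro integrable_mult_right Bochner_Integration.integrable_sum)
      (auto simp: curvature_in_Lp_def)
  show "(\<lambda>z. frob W z powr p) \<in> borel_measurable (completion V)"
    using frob_borel_measurable[OF Lp] by measurable
  have "norm (frob W z powr p)
      \<le> norm (real DIM('a) powr p * (\<Sum>i\<in>Basis. \<Sum>a\<in>Basis. \<bar>W z i a\<bar> powr p))" for z
  proof -
    have "0 \<le> real DIM('a) powr p * (\<Sum>i\<in>Basis. \<Sum>a\<in>Basis. \<bar>W z i a\<bar> powr p)"
      by (intro mult_nonneg_nonneg sum_nonneg) auto
    then show ?thesis
      using frob_powr_le[OF p, of W z] by simp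
  qed
  then show "AE z in completion V. norm (frob W z powr p)
      \<le> norm (real DIM('a) powr p * (\<Sum>i\<in>Basis. \<Sum>a\<in>Basis. \<bar>W z i a\<bar> powr p))"
    by (rule AE_I2)
qed

lemma
  fixes V :: "('a::euclidean_space \<times> 'a) measure"
  assumes V: "finite_measure (completion V)" and Lp: "curvature_in_Lp p V W" and p: "1 \<le> p"
  shows integrable_frob: "integrable (completion V) (frob W)"
    and integral_frob_le: "0 < e \<Longrightarrow> integral\<^sup>L (completion V) (frob W)
          \<le> e * measure V (space V) + e powr (1 - p) * Lp_norm_pow p V W"
proof -
  let ?M = "completion V"
  interpret finite_measure ?M by (rule V)
  have powr: "integrable ?M (\<lambda>z. frob W z powr p)"
    using integrable_frob_powr[OF V Lp] p by simp
  have young: "frob W z \<le> e + e powr (1 - p) * frob W z powr p" if "0 < e" for e z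
    using le_eps_add_powr[OF frob_nonneg that p] .
  have bound: "integrable ?M (\<lambda>z. e + e powr (1 - p) * frob W z powr p)" for e
    using powr by (intro Bochner_Integration.integrable_add integrable_mult_right) auto
  have "norm (frob W z) \<le> norm (1 + 1 powr (1 - p) * frob W z powr p)" for z
    using young[of 1 z] frob_nonneg[of W z] by simp
  then show frob: "integrable ?M (frob W)"
    using frob_borel_measurable[OF Lp] by (intro Bochner_Integration.integrable_bound[OF bound[of 1]] AE_I2) auto
  assume "0 < e"
  then have "integral\<^sup>L ?M (frob W) \<le> integral\<^sup>L ?M (\<lambda>z. e + e powr (1 - p) * frob W z powr p)"
    using young by (intro integral_mono[OF frob bound])
  also have "\<dots> = e * measure V (space V) + e powr (1 - p) * Lp_norm_pow p V W"
    using powr by (simp add: Lp_norm_pow_def)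
  finally show "integral\<^sup>L ?M (frob W) \<le> e * measure V (space V) + e powr (1 - p) * Lp_norm_pow p V W" .
qed

lemma Lp_norm_pow_nonneg: "0 \<le> Lp_norm_pow p V W"
  unfolding Lp_norm_pow_def by (rule integral_nonneg_AE) simp

section \<open>Weights of measures on product spaces\<close>

lemma msupport_compl_null:
  fixes \<mu> :: "'a::euclidean_space measure"
  assumes "sets \<mu> = sets borel"
  shows "- msupport \<mu> \<in> null_sets \<mu>"
proof -
  let ?F = "{ball x r | x r. 0 < r \<and> emeasure \<mu> (ball x r) = 0}"
  have "- msupport \<mu> = \<Union>?F"
  proof (intro equalityI subsetI)
    fix x assume "x \<in> - msupport \<mu>"
    then obtain r where "r > 0" "emeasure \<mu> (ball x r) = 0"
      unfolding msupport_def by (auto simp: not_less)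
    then show "x \<in> \<Union>?F"
      by force
  next
    fix x assume "x \<in> \<Union>?F"
    then obtain y r where "emeasure \<mu> (ball y r) = 0" "x \<in> ball y r"
      by auto
    moreover obtain e where "e > 0" "ball x e \<subseteq> ball y r"
      using \<open>x \<in> ball y r\<close> openE[OF open_ball] by blast
    ultimately have "emeasure \<mu> (ball x e) = 0"
      using emeasure_mono[of "ball x e" "ball y r" \<mu>] assms by simp
    then show "x \<in> - msupport \<mu>"
      using \<open>e > 0\<close> unfolding msupport_def by force
  qed
  moreover obtain F' where "F' \<subseteq> ?F" "countable F'" "\<Union>F' = \<Union>?F"
    using Lindelof[of ?F] by auto
  moreover have "(\<Union>S\<in>F'. S) \<in> null_sets \<mu>"
    using \<open>F' \<subseteq> ?F\<close> assms by (intro null_sets_UN'[OF \<open>countable F'\<close>]) (auto simp: null_sets_def)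
  ultimately show ?thesis
    by simp
qed

lemma fst_measurable_borel:
  fixes M :: "('a::euclidean_space \<times> 'a) measure"
  assumes "sets M = sets borel"
  shows "fst \<in> measurable M borel"
proof -
  have "fst \<in> borel_measurable (borel :: ('a \<times> 'a) measure)"
    by (intro borel_measurable_continuous_onI continuous_intros)
  then show ?thesis
    by (simp add: measurable_cong_sets[OF assms refl])
qed

lemma emeasure_weight:
  fixes M :: "('a::euclidean_space \<times> 'a) measure"
  assumes "sets M = sets borel" and "A \<in> sets borel"
  shows "emeasure (weight M) A = emeasure M (fst -` A)"
  using assms sets_eq_imp_space_eq[OF assms(1)] fst_measurable_borel[OF assms(1)]
  by (simp add: weight_def emeasure_distr)

definition oriented_grassmannian :: "'a::real_normed_vector set \<Rightarrow> ('a \<times> 'a) set" where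
  "oriented_grassmannian A = A \<times> sphere 0 1"

lemma AE_oriented_grassmannian:
  fixes V :: "('a::euclidean_space \<times> 'a) measure"
  assumes V: "oriented_integral_varifold m V" and supp: "msupport (weight V) \<subseteq> A" and "closed A"
  shows "AE z in V. z \<in> oriented_grassmannian A"
proof -
  have sV: "sets V = sets borel" and sphere: "emeasure V (- (UNIV \<times> sphere 0 1)) = 0"
    using V by (auto simp: oriented_integral_varifold_def radon_def)
  have swV: "sets (weight V) = sets borel"
    by (simp add: weight_def)
  have A: "- A \<in> sets borel"
    using \<open>closed A\<close> by (intro borel_open open_Compl)
  have "- A \<in> null_sets (weight V)"
    by (rule null_sets_subset[OF msupport_compl_null[OF swV]]) (use swV supp A in auto)
  then have "emeasure V (fst -` (- A)) = 0"
    using emeasure_weight[OF sV A] by (simp add: null_setsD1)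
  moreover have "fst -` (- A) \<in> sets V"
    using measurable_sets[OF fst_measurable_borel[OF sV] A] sets_eq_imp_space_eq[OF sV]
    by simp
  ultimately have N1: "fst -` (- A) \<in> null_sets V"
    by (simp add: null_sets_def)
  have "closed (UNIV \<times> sphere (0::'a) 1)"
    by (intro closed_Times) auto
  then have "- (UNIV \<times> sphere (0::'a) 1) \<in> sets borel"
    by (intro borel_open open_Compl)
  then have "- (UNIV \<times> sphere (0::'a) 1) \<in> sets V"
    by (simp only: sV)
  then have N2: "- (UNIV \<times> sphere (0::'a) 1) \<in> null_sets V"
    using sphere by (simp only: null_sets_def mem_Collect_eq)
  show ?thesis
    by (rule AE_I'[OF null_sets.Un[OF N1 N2]]) (auto simp: oriented_grassmannian_def)
qed

lemma radon_finite_measure: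
  assumes "radon M" "compact K" "AE z in M. z \<in> K"
  shows "finite_measure M"
proof -
  have sM: "sets M = sets borel"
    using assms(1) by (simp add: radon_def)
  then have "emeasure M (space M) = emeasure M K"
    using assms(2,3) sets_eq_imp_space_eq[OF sM]
    by (intro emeasure_eq_AE) (auto simp: compact_imp_closed borel_closed)
  also have "\<dots> < \<infinity>"
    using assms(1,2) by (simp add: radon_def)
  finally show ?thesis
    by (intro finite_measureI) simp
qed

lemma emeasure_weight_eq_measure:
  fixes M :: "('a::euclidean_space \<times> 'a) measure"
  assumes sM: "sets M = sets borel" and "finite_measure M" "A \<in> sets borel" "AE z in M. fst z \<in> A"
  shows "emeasure (weight M) A = ennreal (measure M UNIV)"
proof -
  have "fst -` A \<in> sets M"
    using measurable_sets[OF fst_measurable_borel[OF sM] assms(3)] sets_eq_imp_space_eq[OF sM]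
    by simp
  then have "emeasure M (fst -` A) = emeasure M (space M)"
    using assms(4) by (intro emeasure_eq_AE) auto
  then show ?thesis
    using emeasure_weight[OF sM assms(3)] finite_measure.emeasure_eq_measure[OF assms(2)]
      sets_eq_imp_space_eq[OF sM]
    by simp
qed

lemma finite_measure_completion: "finite_measure M \<Longrightarrow> finite_measure (completion M)"
  using finite_measure.emeasure_finite by (intro finite_measureI) simp

lemma ennreal_le_mult_add:
  fixes x y z C D :: real
  assumes "x \<le> C * (y + z)" "0 \<le> C" "C \<le> D" "0 \<le> y" "0 \<le> z"
  shows "ennreal x \<le> ennreal D * (ennreal y + ennreal z)"
proof -
  have "x \<le> D * (y + z)"
    using assms by (smt (verit) mult_right_mono)
  then show ?thesis
    using assms by (simp add: ennreal_plus[symmetric] ennreal_mult[symmetric] ennreal_leI del: ennreal_plus)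
qed

locale capillary_domain =
  fixes \<Omega> :: "'a::euclidean_space set" and \<beta> :: "'a \<Rightarrow> real"
  assumes C2_domain: "C2_domain \<Omega>" and bounded: "bounded \<Omega>"
    and continuous_on_beta: "continuous_on (frontier \<Omega>) \<beta>"
    and beta_range: "\<forall>x\<in>frontier \<Omega>. 0 < \<beta> x \<and> \<beta> x < pi"
begin

definition capillary_pair ::
    "real \<Rightarrow> ('a \<times> 'a) measure \<Rightarrow> ('a \<times> 'a) measure \<Rightarrow> ('a \<times> 'a \<Rightarrow> 'a \<Rightarrow> 'a \<Rightarrow> real) \<Rightarrow> bool" where
  "capillary_pair p V \<Gamma> W \<longleftrightarrow>
     sets V = sets borel \<and> finite_measure V \<and> (AE z in V. z \<in> oriented_grassmannian (closure \<Omega>)) \<and>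
     sets \<Gamma> = sets borel \<and> finite_measure \<Gamma> \<and> (AE z in \<Gamma>. z \<in> capillary_bundle \<Omega> \<beta>) \<and>
     curvature_in_Lp p V W \<and> has_capillary_curvature \<Omega> \<beta> V \<Gamma> W"

lemma capillary_bundle_subset: "capillary_bundle \<Omega> \<beta> \<subseteq> oriented_grassmannian (closure \<Omega>)"
  by (auto simp: capillary_bundle_def capillary_fibre_def oriented_grassmannian_def frontier_def)

lemma compact_oriented_grassmannian: "compact (oriented_grassmannian (closure \<Omega>))"
  unfolding oriented_grassmannian_def
  using bounded by (intro compact_Times compact_sphere) (simp add: compact_closure)

lemma closure_norm_bound:
  obtains d where "1 \<le> d" "\<forall>x\<in>closure \<Omega>. norm x \<le> d"
proof -
  obtain d where "\<forall>x\<in>closure \<Omega>. norm x \<le> d"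
    using bounded_closure[OF bounded] by (auto simp: bounded_iff)
  then show thesis
    by (intro that[of "max d 1"]) auto
qed

lemma oriented_grassmannian_inner_bound:
  obtains a where "\<And>z. z \<in> oriented_grassmannian (closure \<Omega>) \<Longrightarrow> z \<bullet> z < a"
proof -
  obtain r where r: "\<forall>z\<in>oriented_grassmannian (closure \<Omega>). norm z \<le> r"
    using compact_imp_bounded[OF compact_oriented_grassmannian] by (auto simp: bounded_iff)
  have "z \<bullet> z < r\<^sup>2 + 1" if "z \<in> oriented_grassmannian (closure \<Omega>)" for z
    using power_mono[OF r[rule_format, OF that] norm_ge_zero, of 2] by (simp add: dot_square_norm)
  then show thesis
    by (rule that)
qed

lemma conormal_polynomial_lower_bound:
  obtains c X where "0 < c" "polynomial_function X"
    "\<And>z. z \<in> capillary_bundle \<Omega> \<beta> \<Longrightarrow> c \<le> X (fst z) \<bullet> conormal \<Omega> \<beta> z"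
proof -
  have S: "compact (frontier \<Omega>)"
    using compact_frontier_bounded[OF bounded] .
  obtain c where c: "0 < c" "\<forall>x\<in>frontier \<Omega>. c \<le> sin (\<beta> x)"
    using sin_bounded_below_on_compact[OF S continuous_on_beta beta_range] by blast
  obtain X :: "'a \<Rightarrow> 'a" where X: "polynomial_function X"
    "\<forall>x\<in>frontier \<Omega>. norm (inward_normal \<Omega> x - X x) < c / 2"
    using Stone_Weierstrass_polynomial_function[OF S continuous_on_inward_normal[OF C2_domain], of "c / 2"] c(1)
    by auto
  have "c / 2 \<le> X (fst z) \<bullet> conormal \<Omega> \<beta> z" if z: "z \<in> capillary_bundle \<Omega> \<beta>" for z
  proof -
    obtain x v where zxv: "z = (x, v)" and x: "x \<in> frontier \<Omega>"
      using z by (cases z) (auto simp: capillary_bundle_def)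
    let ?m = "conormal \<Omega> \<beta> z"
    have "\<bar>(X x - inward_normal \<Omega> x) \<bullet> ?m\<bar> \<le> norm (X x - inward_normal \<Omega> x) * norm ?m"
      by (rule Cauchy_Schwarz_ineq2)
    also have "\<dots> < c / 2"
      using X(2) x norm_conormal[OF C2_domain beta_range z[unfolded zxv]] zxv
      by (simp add: norm_minus_commute)
    finally have "- ((X x - inward_normal \<Omega> x) \<bullet> ?m) < c / 2"
      by (rule le_less_trans[OF abs_ge_minus_self])
    moreover have "c \<le> inward_normal \<Omega> x \<bullet> ?m"
      using conormal_inner_inward_normal[OF C2_domain beta_range z[unfolded zxv]] c(2) x zxv
      by (simp add: inner_commute)
    ultimately show ?thesis
      unfolding zxv fst_conv inner_diff_left by linarith
  qed
  then show thesis
    using c(1) X(1) by (intro that[of "c / 2"]) auto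
qed

lemma capillary_pairI:
  assumes V: "oriented_integral_varifold m V" and supp: "msupport (weight V) \<subseteq> closure \<Omega>"
    and \<Gamma>: "radon \<Gamma>" "emeasure \<Gamma> (- capillary_bundle \<Omega> \<beta>) = 0"
    and W: "curvature_in_Lp p V W" "has_capillary_curvature \<Omega> \<beta> V \<Gamma> W"
  shows "capillary_pair p V \<Gamma> W"
    and "emeasure (weight V) (closure \<Omega>) = ennreal (measure V UNIV)"
    and "emeasure (weight \<Gamma>) (frontier \<Omega>) = ennreal (measure \<Gamma> UNIV)"
proof -
  have rV: "radon V" and sV: "sets V = sets borel" and s\<Gamma>: "sets \<Gamma> = sets borel"
    using V \<Gamma>(1) by (auto simp: oriented_integral_varifold_def radon_def)
  have aeV: "AE z in V. z \<in> oriented_grassmannian (closure \<Omega>)"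
    using AE_oriented_grassmannian[OF V supp] by simp
  have "- capillary_bundle \<Omega> \<beta> \<in> sets \<Gamma>"
    using s\<Gamma> closed_capillary_bundle[OF C2_domain continuous_on_beta] by (simp add: borel_open open_Compl)
  then have ae\<Gamma>: "AE z in \<Gamma>. z \<in> capillary_bundle \<Omega> \<beta>"
    using \<Gamma>(2) by (intro AE_I'[of "- capillary_bundle \<Omega> \<beta>"]) auto
  have fV: "finite_measure V"
    using rV compact_oriented_grassmannian aeV by (rule radon_finite_measure)
  have "AE z in \<Gamma>. z \<in> oriented_grassmannian (closure \<Omega>)"
    using ae\<Gamma> capillary_bundle_subset by (auto elim: eventually_mono)
  then have f\<Gamma>: "finite_measure \<Gamma>"
    using \<Gamma>(1) compact_oriented_grassmannian by (intro radon_finite_measure)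
  show "capillary_pair p V \<Gamma> W"
    using sV fV aeV s\<Gamma> f\<Gamma> ae\<Gamma> W by (simp add: capillary_pair_def)
  have "AE z in V. fst z \<in> closure \<Omega>"
    using aeV by (auto simp: oriented_grassmannian_def elim: eventually_mono)
  then show "emeasure (weight V) (closure \<Omega>) = ennreal (measure V UNIV)"
    by (intro emeasure_weight_eq_measure[OF sV fV]) auto
  have "AE z in \<Gamma>. fst z \<in> frontier \<Omega>"
    using ae\<Gamma> by (auto simp: capillary_bundle_def elim: eventually_mono)
  then show "emeasure (weight \<Gamma>) (frontier \<Omega>) = ennreal (measure \<Gamma> UNIV)"
    by (intro emeasure_weight_eq_measure[OF s\<Gamma> f\<Gamma>]) auto
qed

lemma first_variation_inequality:
  assumes pair: "capillary_pair p V \<Gamma> W" and p: "1 \<le> p"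
    and \<Psi>: "\<forall>i\<in>Basis. C1c (\<lambda>z. \<Psi> z \<bullet> i)"
    and V_bound: "\<And>z. z \<in> oriented_grassmannian (closure \<Omega>) \<Longrightarrow>
      \<alpha> - \<kappa> * frob W z \<le> first_variation_density W \<Psi> z"
    and \<Gamma>_bound: "\<And>z. z \<in> capillary_bundle \<Omega> \<beta> \<Longrightarrow> \<gamma> \<le> \<Psi> z \<bullet> conormal \<Omega> \<beta> z"
  shows "\<alpha> * measure V UNIV + \<gamma> * measure \<Gamma> UNIV \<le> \<kappa> * integral\<^sup>L (completion V) (frob W)"
proof -
  have sV: "sets V = sets borel" and "finite_measure V"
    and aeV: "AE z in V. z \<in> oriented_grassmannian (closure \<Omega>)"
    and s\<Gamma>: "sets \<Gamma> = sets borel" and f\<Gamma>: "finite_measure \<Gamma>"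
    and ae\<Gamma>: "AE z in \<Gamma>. z \<in> capillary_bundle \<Omega> \<beta>"
    and Lp: "curvature_in_Lp p V W" and curv: "has_capillary_curvature \<Omega> \<beta> V \<Gamma> W"
    using pair by (auto simp: capillary_pair_def)
  have spV: "space V = UNIV" and sp\<Gamma>: "space \<Gamma> = UNIV"
    using sets_eq_imp_space_eq[OF sV] sets_eq_imp_space_eq[OF s\<Gamma>] by simp_all
  have fV: "finite_measure (completion V)"
    using \<open>finite_measure V\<close> by (rule finite_measure_completion)
  note frob = integrable_frob[OF fV Lp p]
  note identity = first_variation_identity[OF curv \<Psi> f\<Gamma> s\<Gamma>
      conormal_borel_measurable[OF C2_domain continuous_on_beta beta_range]]
  interpret V: finite_measure "completion V" by (rule fV)
  interpret \<Gamma>: finite_measure \<Gamma> by (rule f\<Gamma>)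
  have int: "integrable (completion V) (\<lambda>z. \<alpha> - \<kappa> * frob W z)"
    using frob by (intro Bochner_Integration.integrable_diff integrable_mult_right) auto
  have "AE z in completion V. \<alpha> - \<kappa> * frob W z \<le> first_variation_density W \<Psi> z"
    using AE_completion[OF aeV] by eventually_elim (rule V_bound)
  then have "(\<integral>z. \<alpha> - \<kappa> * frob W z \<partial>completion V) \<le> (\<integral>z. first_variation_density W \<Psi> z \<partial>completion V)"
    by (rule integral_mono_AE[OF int identity(1)])
  moreover have "AE z in \<Gamma>. \<gamma> \<le> \<Psi> z \<bullet> conormal \<Omega> \<beta> z"
    using ae\<Gamma> by eventually_elim (rule \<Gamma>_bound)
  then have "(\<integral>z. \<gamma> \<partial>\<Gamma>) \<le> (\<integral>z. \<Psi> z \<bullet> conormal \<Omega> \<beta> z \<partial>\<Gamma>)"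
    by (rule integral_mono_AE[OF \<Gamma>.integrable_const identity(2)])
  moreover have "(\<integral>z. \<alpha> - \<kappa> * frob W z \<partial>completion V)
      = \<alpha> * measure V UNIV - \<kappa> * integral\<^sup>L (completion V) (frob W)"
    using frob spV sV by simp
  moreover have "(\<integral>z. \<gamma> \<partial>\<Gamma>) = \<gamma> * measure \<Gamma> UNIV"
    by (simp add: sp\<Gamma> mult.commute)
  ultimately show ?thesis
    using identity(3) by linarith
qed

lemma capillary_pair_integral_frob_le:
  assumes "capillary_pair p V \<Gamma> W" "1 \<le> p" "0 < e"
  shows "integral\<^sup>L (completion V) (frob W) \<le> e * measure V UNIV + e powr (1 - p) * Lp_norm_pow p V W"
proof -
  have sV: "sets V = sets borel" and "finite_measure V" and Lp: "curvature_in_Lp p V W"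
    using assms(1) by (auto simp: capillary_pair_def)
  then have "finite_measure (completion V)"
    by (intro finite_measure_completion)
  then show ?thesis
    using integral_frob_le[OF _ Lp assms(2,3)] sets_eq_imp_space_eq[OF sV] by simp
qed

lemma position_inner_conormal_ge:
  assumes "\<forall>x\<in>closure \<Omega>. norm x \<le> d" "1 \<le> d" "z \<in> capillary_bundle \<Omega> \<beta>"
  shows "- d \<le> fst z \<bullet> conormal \<Omega> \<beta> z"
proof -
  have "\<bar>fst z \<bullet> conormal \<Omega> \<beta> z\<bar> \<le> norm (fst z) * norm (conormal \<Omega> \<beta> z)"
    by (rule Cauchy_Schwarz_ineq2)
  also have "\<dots> \<le> d * 1"
    using assms capillary_bundle_subset norm_conormal_le[of \<Omega> \<beta> z]
    by (intro mult_mono) (auto simp: oriented_grassmannian_def)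
  finally show ?thesis
    by simp
qed

lemma position_field_inequality:
  assumes p: "1 \<le> p"
  obtains d where "1 \<le> d" "\<And>V \<Gamma> W. capillary_pair p V \<Gamma> W \<Longrightarrow>
    (real DIM('a) - 1) * measure V UNIV
      \<le> d * measure \<Gamma> UNIV + 2 * real DIM('a)^2 * d * integral\<^sup>L (completion V) (frob W)"
proof -
  obtain d where d: "1 \<le> d" "\<forall>x\<in>closure \<Omega>. norm x \<le> d"
    using closure_norm_bound by blast
  obtain a where a: "\<And>z. z \<in> oriented_grassmannian (closure \<Omega>) \<Longrightarrow> z \<bullet> z < a"
    using oriented_grassmannian_inner_bound by blast
  have ineq: "(real DIM('a) - 1) * measure V UNIV + (- d) * measure \<Gamma> UNIV
      \<le> 2 * real DIM('a)^2 * d * integral\<^sup>L (completion V) (frob W)"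
    if pair: "capillary_pair p V \<Gamma> W" for V \<Gamma> W
  proof (rule first_variation_inequality[OF pair p C1c_cutoff_field[OF _ polynomial_function_id]])
    show "a < a + 1"
      by simp
    show "real DIM('a) - 1 - 2 * real DIM('a)^2 * d * frob W z
        \<le> first_variation_density W (cutoff_field a (a + 1) (\<lambda>x. x)) z"
      if "z \<in> oriented_grassmannian (closure \<Omega>)" for z
      using that d(2) a[OF that]
      by (intro first_variation_density_position_ge) (auto simp: oriented_grassmannian_def)
    show "- d \<le> cutoff_field a (a + 1) (\<lambda>x. x) z \<bullet> conormal \<Omega> \<beta> z"
      if "z \<in> capillary_bundle \<Omega> \<beta>" for z
      using position_inner_conormal_ge[OF d(2,1) that] cutoff_field_eq[of a "a + 1" z] a[of z]
        that capillary_bundle_subset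
      by force
  qed
  show thesis
  proof (rule that[OF d(1)])
    show "(real DIM('a) - 1) * measure V UNIV
        \<le> d * measure \<Gamma> UNIV + 2 * real DIM('a)^2 * d * integral\<^sup>L (completion V) (frob W)"
      if "capillary_pair p V \<Gamma> W" for V \<Gamma> W
      using ineq[OF that] by linarith
  qed
qed

lemma normal_field_inequality:
  assumes p: "1 \<le> p"
  obtains c B where "0 < c" "0 \<le> B" "\<And>V \<Gamma> W. capillary_pair p V \<Gamma> W \<Longrightarrow>
    c * measure \<Gamma> UNIV \<le> B * measure V UNIV + B * integral\<^sup>L (completion V) (frob W)"
proof -
  obtain a where a: "\<And>z. z \<in> oriented_grassmannian (closure \<Omega>) \<Longrightarrow> z \<bullet> z < a"
    using oriented_grassmannian_inner_bound by blast
  obtain c X where c: "0 < c" and X: "polynomial_function X"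
    and X_conormal: "\<And>z. z \<in> capillary_bundle \<Omega> \<beta> \<Longrightarrow> c \<le> X (fst z) \<bullet> conormal \<Omega> \<beta> z"
    using conormal_polynomial_lower_bound by blast
  have ab: "a < a + 1"
    by simp
  have "z \<bullet> z < a \<and> norm (snd z) = 1" if "z \<in> oriented_grassmannian (closure \<Omega>)" for z
    using a[OF that] that by (auto simp: oriented_grassmannian_def)
  then obtain B where B: "0 \<le> B" "\<And>W z. z \<in> oriented_grassmannian (closure \<Omega>) \<Longrightarrow>
      - B - B * frob W z \<le> first_variation_density W (cutoff_field a (a + 1) X) z"
    using cutoff_field_first_variation_bounded[OF ab X compact_oriented_grassmannian] by blast
  have "(- B) * measure V UNIV + c * measure \<Gamma> UNIV \<le> B * integral\<^sup>L (completion V) (frob W)"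
    if pair: "capillary_pair p V \<Gamma> W" for V \<Gamma> W
  proof (rule first_variation_inequality[OF pair p C1c_cutoff_field[OF ab X]])
    show "- B - B * frob W z \<le> first_variation_density W (cutoff_field a (a + 1) X) z"
      if "z \<in> oriented_grassmannian (closure \<Omega>)" for z
      using B(2)[OF that] .
    show "c \<le> cutoff_field a (a + 1) X z \<bullet> conormal \<Omega> \<beta> z"
      if "z \<in> capillary_bundle \<Omega> \<beta>" for z
      using X_conormal[OF that] cutoff_field_eq[of a "a + 1" z X] a[of z] that capillary_bundle_subset
      by force
  qed
  then show thesis
    using c B(1) by (intro that[of c B]) (auto simp: algebra_simps)
qed

lemma varifold_mass_estimate:
  assumes dim: "2 \<le> DIM('a)" and p: "1 \<le> p"
  obtains C where "0 \<le> C"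
    and "\<And>V \<Gamma> W. capillary_pair p V \<Gamma> W \<Longrightarrow> measure V UNIV \<le> C * (measure \<Gamma> UNIV + Lp_norm_pow p V W)"
proof -
  obtain d where d: "1 \<le> d" and ineq: "\<And>V \<Gamma> W. capillary_pair p V \<Gamma> W \<Longrightarrow>
      (real DIM('a) - 1) * measure V UNIV
        \<le> d * measure \<Gamma> UNIV + 2 * real DIM('a)^2 * d * integral\<^sup>L (completion V) (frob W)"
    using position_field_inequality[OF p] by blast
  define h where "h = (real DIM('a) - 1) / 2"
  define \<kappa> where "\<kappa> = 2 * real DIM('a)^2 * d"
  \<comment> \<open>\<open>\<epsilon>\<close> is chosen so that the curvature term absorbs half of the mass term.\<close>
  define \<epsilon> where "\<epsilon> = h / \<kappa>"
  have h: "0 < h" and \<kappa>: "0 < \<kappa>" and \<epsilon>: "0 < \<epsilon>" "\<kappa> * \<epsilon> = h"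
    using dim d by (auto simp: h_def \<kappa>_def \<epsilon>_def)
  define K where "K = max d (\<kappa> * \<epsilon> powr (1 - p))"
  show thesis
  proof (rule that[of "K / h"])
    show "0 \<le> K / h"
      using h d by (simp add: K_def le_max_iff_disj)
    fix V \<Gamma> W
    assume pair: "capillary_pair p V \<Gamma> W"
    let ?M = "measure V UNIV" and ?G = "measure \<Gamma> UNIV" and ?L = "Lp_norm_pow p V W"
      and ?F = "integral\<^sup>L (completion V) (frob W)"
    have "\<kappa> * ?F \<le> \<kappa> * (\<epsilon> * ?M + \<epsilon> powr (1 - p) * ?L)"
      using capillary_pair_integral_frob_le[OF pair p \<epsilon>(1)] \<kappa> by (intro mult_left_mono) auto
    moreover have "\<kappa> * (\<epsilon> * ?M + \<epsilon> powr (1 - p) * ?L) = h * ?M + \<kappa> * \<epsilon> powr (1 - p) * ?L"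
      using \<epsilon>(2) by (simp add: distrib_left mult.assoc[symmetric])
    moreover have "d * ?G + \<kappa> * \<epsilon> powr (1 - p) * ?L \<le> K * (?G + ?L)"
      using Lp_norm_pow_nonneg[of p V W] unfolding distrib_left
      by (intro add_mono mult_right_mono) (auto simp: K_def)
    moreover have "(real DIM('a) - 1) * ?M = h * ?M + h * ?M"
      using dim by (simp add: h_def field_simps)
    ultimately have "h * ?M \<le> K * (?G + ?L)"
      using ineq[OF pair] unfolding \<kappa>_def by linarith
    then show "?M \<le> K / h * (?G + ?L)"
      using h by (simp add: pos_le_divide_eq mult.commute)
  qed
qed

lemma boundary_mass_estimate:
  assumes p: "1 \<le> p"
  obtains C where "0 \<le> C"
    and "\<And>V \<Gamma> W. capillary_pair p V \<Gamma> W \<Longrightarrow> measure \<Gamma> UNIV \<le> C * (measure V UNIV + Lp_norm_pow p V W)"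
proof -
  obtain c B where c: "0 < c" and B: "0 \<le> B" and ineq: "\<And>V \<Gamma> W. capillary_pair p V \<Gamma> W \<Longrightarrow>
      c * measure \<Gamma> UNIV \<le> B * measure V UNIV + B * integral\<^sup>L (completion V) (frob W)"
    using normal_field_inequality[OF p] by blast
  show thesis
  proof (rule that[of "2 * B / c"])
    show "0 \<le> 2 * B / c"
      using B c by simp
    fix V \<Gamma> W
    assume pair: "capillary_pair p V \<Gamma> W"
    let ?M = "measure V UNIV" and ?G = "measure \<Gamma> UNIV" and ?L = "Lp_norm_pow p V W"
    have "B * integral\<^sup>L (completion V) (frob W) \<le> B * (?M + ?L)"
      using capillary_pair_integral_frob_le[OF pair p zero_less_one] B by (intro mult_left_mono) auto
    moreover have "B * ?M + B * (?M + ?L) \<le> 2 * B * (?M + ?L)"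
      using B Lp_norm_pow_nonneg[of p V W] by (simp add: algebra_simps)
    ultimately have "c * ?G \<le> 2 * B * (?M + ?L)"
      using ineq[OF pair] by linarith
    then show "?G \<le> 2 * B / c * (?M + ?L)"
      using c by (simp add: pos_le_divide_eq mult.commute)
  qed
qed

lemma capillary_estimates:
  assumes "2 \<le> DIM('a)" and "1 \<le> p"
  obtains C where "\<And>m V \<Gamma> W. oriented_integral_varifold m V \<Longrightarrow> msupport (weight V) \<subseteq> closure \<Omega> \<Longrightarrow>
      radon \<Gamma> \<Longrightarrow> emeasure \<Gamma> (- capillary_bundle \<Omega> \<beta>) = 0 \<Longrightarrow>
      curvature_in_Lp p V W \<Longrightarrow> has_capillary_curvature \<Omega> \<beta> V \<Gamma> W \<Longrightarrow>
      emeasure (weight V) (closure \<Omega>)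
        \<le> ennreal C * (emeasure (weight \<Gamma>) (frontier \<Omega>) + ennreal (Lp_norm_pow p V W)) \<and>
      emeasure (weight \<Gamma>) (frontier \<Omega>)
        \<le> ennreal C * (emeasure (weight V) (closure \<Omega>) + ennreal (Lp_norm_pow p V W))"
proof -
  obtain C1 where C1: "0 \<le> C1" "\<And>V \<Gamma> W. capillary_pair p V \<Gamma> W \<Longrightarrow>
      measure V UNIV \<le> C1 * (measure \<Gamma> UNIV + Lp_norm_pow p V W)"
    using varifold_mass_estimate[OF assms] by blast
  obtain C2 where C2: "0 \<le> C2" "\<And>V \<Gamma> W. capillary_pair p V \<Gamma> W \<Longrightarrow>
      measure \<Gamma> UNIV \<le> C2 * (measure V UNIV + Lp_norm_pow p V W)"
    using boundary_mass_estimate[OF assms(2)] by blast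
  show thesis
  proof (rule that[of "max C1 C2"])
    fix m V \<Gamma> W
    assume "oriented_integral_varifold m V" "msupport (weight V) \<subseteq> closure \<Omega>"
      "radon \<Gamma>" "emeasure \<Gamma> (- capillary_bundle \<Omega> \<beta>) = 0"
      "curvature_in_Lp p V W" "has_capillary_curvature \<Omega> \<beta> V \<Gamma> W"
    note pair = capillary_pairI[OF this]
    show "emeasure (weight V) (closure \<Omega>)
        \<le> ennreal (max C1 C2) * (emeasure (weight \<Gamma>) (frontier \<Omega>) + ennreal (Lp_norm_pow p V W)) \<and>
      emeasure (weight \<Gamma>) (frontier \<Omega>)
        \<le> ennreal (max C1 C2) * (emeasure (weight V) (closure \<Omega>) + ennreal (Lp_norm_pow p V W))"
      unfolding pair(2,3)
      using ennreal_le_mult_add[OF C1(2)[OF pair(1)] C1(1)] ennreal_le_mult_add[OF C2(2)[OF pair(1)] C2(1)]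
      by (simp add: Lp_norm_pow_nonneg)
  qed
qed

end

theorem lemma4p1:
  fixes \<Omega> :: "'a::euclidean_space set" and \<beta> :: "'a \<Rightarrow> real" and p :: real
  assumes "DIM('a) \<ge> 2"
    and "C2_domain \<Omega>" and "bounded \<Omega>"
    and "C1_on_surface (frontier \<Omega>) \<beta>" and "\<forall>x\<in>frontier \<Omega>. 0 < \<beta> x \<and> \<beta> x < pi"
    and "p \<ge> 1"
  shows "\<exists>C::real. \<forall>(V :: ('a \<times> 'a) measure) (\<Gamma> :: ('a \<times> 'a) measure) W.
     oriented_integral_varifold (DIM('a) - 1) V \<and> msupport (weight V) \<subseteq> closure \<Omega> \<and>
     C2_rectifiable_measure (DIM('a) - 1) (weight V) \<and>
     radon \<Gamma> \<and> emeasure \<Gamma> (- capillary_bundle \<Omega> \<beta>) = 0 \<and>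
     (AE x in weight V. x \<notin> msupport (weight \<Gamma>)) \<and>
     curvature_in_Lp p V W \<and> has_capillary_curvature \<Omega> \<beta> V \<Gamma> W
     \<longrightarrow> emeasure (weight V) (closure \<Omega>)
            \<le> ennreal C * (emeasure (weight \<Gamma>) (frontier \<Omega>) + ennreal (Lp_norm_pow p V W))
       \<and> emeasure (weight \<Gamma>) (frontier \<Omega>)
            \<le> ennreal C * (emeasure (weight V) (closure \<Omega>) + ennreal (Lp_norm_pow p V W))"
proof -
  interpret capillary_domain \<Omega> \<beta>
    using assms(2-5) C1_on_surface_imp_continuous_on by unfold_locales auto
  show ?thesis
    by (rule capillary_estimates[OF assms(1,6)]) blast
qed

end
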